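(* Let $(\mathfrak{g},V,\Theta)$ be a Lie-Leibniz triple, with associated graded Lie algebra $T_{\leq-1}$ and differential $\partial=(\partial_{-i}:T_{-i-1}\to T_{-i})_{i\geq1}$. For each $i\geq1$ let $R_{-i}$ be the cyclic $\mathfrak{g}$-submodule of $\mathrm{Hom}(T_{-i-1},T_{-i})$ generated by $\partial_{-i}$. Then for every $i\geq1$ there exists a surjective morphism of $\mathfrak{g}$-modules $\mu_{-i}:R_\Theta\to R_{-i}$ such that $\partial_{-i}=\mu_{-i}(\Theta)$.
   Context: A (left) Leibniz algebra is a vector space $V$ with bilinear $\circ$ satisfying $x\circ(y\circ z)=(x\circ y)\circ z+y\circ(x\circ z)$; $\{x,y\}=\frac12(x\circ y+y\circ x)$. A Lie-Leibniz triple $(\mathfrak{g},V,\Theta)$ consists of a Lie algebra $\mathfrak{g}$, a $\mathfrak{g}$-module $V$ (action $a\cdot x$) with a Leibniz product $\circ$, and a linear map $\Theta:V\to\mathfrak{g}$ with $x\circ y=\Theta(x)\cdot y$ and $\Theta(x\circ y)=[\Theta(x),\Theta(y)]$. $\mathfrak{g}$ acts on $\mathrm{Hom}(V,\mathfrak{g})$ by $(a\cdot\Xi)(x)=[a,\Xi(x)]-\Xi(a\cdot x)$, and $R_\Theta$ is the cyclic $\mathfrak{g}$-submodule generated by $\Theta$ (spanned by $\Theta$ and all $a_1\cdot(a_2\cdot(\cdots(a_m\cdot\Theta)))$). Similarly $\mathfrak g$ acts on $\mathrm{Hom}(T_{-i-1},T_{-i})$ by $(a\cdot f)(x)=a\cdot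 f(x)-f(a\cdot x)$. Associated graded Lie algebra: let $K$ be the largest $\mathfrak{g}$-submodule of $S^2(V)$ in the kernel of $x\odot y\mapsto\{x,y\}$; $F$ the free graded Lie algebra on $V[1]$ (degree $-1$), $F_{-2}\cong S^2(V)$, $\mathfrak g$ acting by derivations; $K_{-2}=K$, $K_{-i}=\sum_{j=1}^{i-2}[F_{-j},K_{-i+j}]$ ($i\geq3$); $T_{\leq-1}=F/K_\bullet$, $T_{-1}=V[1]$, with induced bracket $\llbracket\,.\,,.\,\rrbracket$ and $\mathfrak{g}$-action. With $\mathfrak{h}=\mathrm{Im}\Theta$, $\partial$ is the unique family of $\mathfrak{h}$-equivariant linear maps $\partial_{-i}:T_{-i-1}\to T_{-i}$ with $\partial\llbracket u,v\rrbracket=2\{u,v\}$, $\partial\llbracket u,x\rrbracket=\Theta(u)\cdot x-\llbracket u,\partial x\rrbracket$, $\partial\llbracket x,y\rrbracket=\llbracket\partial x,y\rrbracket+(-1)^{|x|}\llbracket x,\partial y\rrbracket$ for $u,v\in T_{-1}$, $x,y\in T_{\leq-2}$. *)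

theory Defs
  imports Complex_Main "HOL-Library.Function_Algebras"
begin

definition lie_algebra :: "('k::field \<Rightarrow> 'g \<Rightarrow> 'g::ab_group_add) \<Rightarrow> ('g \<Rightarrow> 'g \<Rightarrow> 'g) \<Rightarrow> bool" where
  "lie_algebra sg br \<longleftrightarrow> Vector_Spaces.vector_space sg
     \<and> (\<forall>x y z. br (x + y) z = br x z + br y z) \<and> (\<forall>x y z. br x (y + z) = br x y + br x z)
     \<and> (\<forall>c x y. br (sg c x) y = sg c (br x y)) \<and> (\<forall>c x y. br x (sg c y) = sg c (br x y))
     \<and> (\<forall>x. br x x = 0)
     \<and> (\<forall>x y z. br x (br y z) + br y (br z x) + br z (br x y) = 0)"

definition lie_module :: "('k::field \<Rightarrow> 'g \<Rightarrow> 'g::ab_group_add) \<Rightarrow> ('g \<Rightarrow> 'g \<Rightarrow> 'g) \<Rightarrow>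
    ('k \<Rightarrow> 'v \<Rightarrow> 'v::ab_group_add) \<Rightarrow> ('g \<Rightarrow> 'v \<Rightarrow> 'v) \<Rightarrow> bool" where
  "lie_module sg br sv act \<longleftrightarrow> Vector_Spaces.vector_space sv
     \<and> (\<forall>a b x. act (a + b) x = act a x + act b x) \<and> (\<forall>a x y. act a (x + y) = act a x + act a y)
     \<and> (\<forall>c a x. act (sg c a) x = sv c (act a x)) \<and> (\<forall>c a x. act a (sv c x) = sv c (act a x))
     \<and> (\<forall>a b x. act (br a b) x = act a (act b x) - act b (act a x))"

definition leibniz_algebra :: "('k::field \<Rightarrow> 'v \<Rightarrow> 'v::ab_group_add) \<Rightarrow> ('v \<Rightarrow> 'v \<Rightarrow> 'v) \<Rightarrow> bool" where
  "leibniz_algebra sv circ \<longleftrightarrow> Vector_Spaces.vector_space sv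
     \<and> (\<forall>x y z. circ (x + y) z = circ x z + circ y z) \<and> (\<forall>x y z. circ x (y + z) = circ x y + circ x z)
     \<and> (\<forall>c x y. circ (sv c x) y = sv c (circ x y)) \<and> (\<forall>c x y. circ x (sv c y) = sv c (circ x y))
     \<and> (\<forall>x y z. circ x (circ y z) = circ (circ x y) z + circ y (circ x z))"

definition lie_leibniz_triple ::
  "('k::field \<Rightarrow> 'g \<Rightarrow> 'g::ab_group_add) \<Rightarrow> ('g \<Rightarrow> 'g \<Rightarrow> 'g) \<Rightarrow>
   ('k \<Rightarrow> 'v \<Rightarrow> 'v::ab_group_add) \<Rightarrow> ('g \<Rightarrow> 'v \<Rightarrow> 'v) \<Rightarrow> ('v \<Rightarrow> 'v \<Rightarrow> 'v) \<Rightarrow> ('v \<Rightarrow> 'g) \<Rightarrow> bool" where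
  "lie_leibniz_triple sg br sv act circ Theta \<longleftrightarrow>
     lie_algebra sg br \<and> lie_module sg br sv act \<and> leibniz_algebra sv circ
     \<and> Vector_Spaces.linear sv sg Theta
     \<and> (\<forall>x y. circ x y = act (Theta x) y)
     \<and> (\<forall>x y. Theta (circ x y) = br (Theta x) (Theta y))"

definition symprod :: "('k::field \<Rightarrow> 'v \<Rightarrow> 'v::ab_group_add) \<Rightarrow> ('v \<Rightarrow> 'v \<Rightarrow> 'v) \<Rightarrow> 'v \<Rightarrow> 'v \<Rightarrow> 'v" where
  "symprod sv circ x y = sv (1/2) (circ x y + circ y x)"

inductive_set gspan :: "'a \<Rightarrow> ('a \<Rightarrow> 'a \<Rightarrow> 'a) \<Rightarrow> ('k \<Rightarrow> 'a \<Rightarrow> 'a) \<Rightarrow> 'a set \<Rightarrow> 'a set"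
  for z :: 'a and ad :: "'a \<Rightarrow> 'a \<Rightarrow> 'a" and sm :: "'k \<Rightarrow> 'a \<Rightarrow> 'a" and S :: "'a set" where
  gspan_zero: "z \<in> gspan z ad sm S"
| gspan_base: "x \<in> S \<Longrightarrow> x \<in> gspan z ad sm S"
| gspan_add: "x \<in> gspan z ad sm S \<Longrightarrow> y \<in> gspan z ad sm S \<Longrightarrow> ad x y \<in> gspan z ad sm S"
| gspan_smul: "x \<in> gspan z ad sm S \<Longrightarrow> sm c x \<in> gspan z ad sm S"

definition homVact :: "('g \<Rightarrow> 'g \<Rightarrow> 'g::ab_group_add) \<Rightarrow> ('g \<Rightarrow> 'v \<Rightarrow> 'v) \<Rightarrow> 'g \<Rightarrow> ('v \<Rightarrow> 'g) \<Rightarrow> ('v \<Rightarrow> 'g)" where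
  "homVact br act a Xi = (\<lambda>x. br a (Xi x) - Xi (act a x))"

definition homVadd :: "('v \<Rightarrow> 'g::ab_group_add) \<Rightarrow> ('v \<Rightarrow> 'g) \<Rightarrow> ('v \<Rightarrow> 'g)" where
  "homVadd f h = (\<lambda>x. f x + h x)"

definition homVsmul :: "('k \<Rightarrow> 'g \<Rightarrow> 'g) \<Rightarrow> 'k \<Rightarrow> ('v \<Rightarrow> 'g) \<Rightarrow> ('v \<Rightarrow> 'g)" where
  "homVsmul sg c f = (\<lambda>x. sg c (f x))"

definition R_Theta :: "('k \<Rightarrow> 'g \<Rightarrow> 'g::ab_group_add) \<Rightarrow> ('g \<Rightarrow> 'g \<Rightarrow> 'g) \<Rightarrow> ('g \<Rightarrow> 'v \<Rightarrow> 'v) \<Rightarrow>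
    ('v \<Rightarrow> 'g) \<Rightarrow> ('v \<Rightarrow> 'g) set" where
  "R_Theta sg br act Theta =
     gspan (\<lambda>_. 0) homVadd (homVsmul sg) {foldr (homVact br act) as Theta | as. True}"

section \<open>Free graded Lie (super)algebra F on V[1], realised as the free nonassociative
  algebra on V (formal linear combinations of binary trees with leaves in V) modulo the
  ideal generated by linearity in the leaves, graded antisymmetry and graded Jacobi.
  A tree with n leaves has degree -n.\<close>

datatype 'v ltree = Leaf 'v | Node "'v ltree" "'v ltree"

fun nlv :: "'v ltree \<Rightarrow> nat" where
  "nlv (Leaf x) = 1"
| "nlv (Node s t) = nlv s + nlv t"

text \<open>Formal (finitely supported) linear combinations of trees.\<close>
type_synonym ('v, 'k) fv = "'v ltree \<Rightarrow> 'k"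

definition dl :: "'v ltree \<Rightarrow> ('v, 'k::zero_neq_one) fv" where
  "dl t = (\<lambda>s. if s = t then 1 else 0)"

definition smul :: "'k::times \<Rightarrow> ('v, 'k) fv \<Rightarrow> ('v, 'k) fv" where
  "smul c f = (\<lambda>s. c * f s)"

definition brF :: "('v, 'k::{zero,times}) fv \<Rightarrow> ('v, 'k) fv \<Rightarrow> ('v, 'k) fv" where
  "brF f h = (\<lambda>t. case t of Leaf _ \<Rightarrow> 0 | Node s r \<Rightarrow> f s * h r)"

definition FT :: "nat \<Rightarrow> ('v, 'k::field) fv set" where
  "FT i = gspan 0 (+) smul {dl t | t. nlv t = i}"

definition FTtot :: "('v, 'k::field) fv set" where
  "FTtot = gspan 0 (+) smul (range dl)"

definition sgnk :: "nat \<Rightarrow> 'k::field" where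
  "sgnk n = (-1) ^ n"

definition relgens :: "('k::field \<Rightarrow> 'v \<Rightarrow> 'v::ab_group_add) \<Rightarrow> ('v, 'k) fv set" where
  "relgens sv =
     {dl (Leaf (sv c x + y)) - smul c (dl (Leaf x)) - dl (Leaf y) | c x y. True}
   \<union> {brF (dl s) (dl t) + smul (sgnk (nlv s * nlv t)) (brF (dl t) (dl s)) | s t. True}
   \<union> {brF (dl s) (brF (dl t) (dl r)) - brF (brF (dl s) (dl t)) (dl r)
        - smul (sgnk (nlv s * nlv t)) (brF (dl t) (brF (dl s) (dl r))) | s t r. True}"

inductive_set Iid :: "('k::field \<Rightarrow> 'v \<Rightarrow> 'v::ab_group_add) \<Rightarrow> ('v, 'k) fv set"
  for sv :: "'k \<Rightarrow> 'v \<Rightarrow> 'v" where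
  Iid_gen: "f \<in> relgens sv \<Longrightarrow> f \<in> Iid sv"
| Iid_zero: "0 \<in> Iid sv"
| Iid_add: "f \<in> Iid sv \<Longrightarrow> h \<in> Iid sv \<Longrightarrow> f + h \<in> Iid sv"
| Iid_smul: "f \<in> Iid sv \<Longrightarrow> smul c f \<in> Iid sv"
| Iid_brl: "f \<in> Iid sv \<Longrightarrow> brF (dl p) f \<in> Iid sv"
| Iid_brr: "f \<in> Iid sv \<Longrightarrow> brF f (dl p) \<in> Iid sv"

fun actTree :: "('g \<Rightarrow> 'v \<Rightarrow> 'v) \<Rightarrow> 'g \<Rightarrow> 'v ltree \<Rightarrow> ('v, 'k::field) fv" where
  "actTree act a (Leaf x) = dl (Leaf (act a x))"
| "actTree act a (Node s t) = brF (actTree act a s) (dl t) + brF (dl s) (actTree act a t)"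

definition actF :: "('g \<Rightarrow> 'v \<Rightarrow> 'v) \<Rightarrow> 'g \<Rightarrow> ('v, 'k::field) fv \<Rightarrow> ('v, 'k) fv" where
  "actF act a f = (\<Sum>t\<in>{t. f t \<noteq> 0}. smul (f t) (actTree act a t))"

text \<open>The map F_{-2} = S^2(V) -> V, [u,v] = u.v |-> {u,v}, on representatives.\<close>
fun phiT :: "('k::field \<Rightarrow> 'v \<Rightarrow> 'v::ab_group_add) \<Rightarrow> ('v \<Rightarrow> 'v \<Rightarrow> 'v) \<Rightarrow> 'v ltree \<Rightarrow> 'v" where
  "phiT sv circ (Node (Leaf u) (Leaf v)) = symprod sv circ u v"
| "phiT sv circ _ = 0"

definition Phi :: "('k::field \<Rightarrow> 'v \<Rightarrow> 'v::ab_group_add) \<Rightarrow> ('v \<Rightarrow> 'v \<Rightarrow> 'v) \<Rightarrow> ('v, 'k) fv \<Rightarrow> 'v" where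
  "Phi sv circ f = (\<Sum>t\<in>{t. f t \<noteq> 0}. sv (f t) (phiT sv circ t))"

text \<open>Lift to F-tilde_{-2} of K = K_{-2}: the largest g-submodule of F_{-2} contained in the
  kernel of x.y |-> {x,y}; submodules of F_{-2} are represented by subspaces of
  F-tilde_{-2} containing the relations of degree 2.\<close>
definition K2set :: "('k::field \<Rightarrow> 'v \<Rightarrow> 'v::ab_group_add) \<Rightarrow> ('g \<Rightarrow> 'v \<Rightarrow> 'v) \<Rightarrow> ('v \<Rightarrow> 'v \<Rightarrow> 'v) \<Rightarrow> ('v, 'k) fv set" where
  "K2set sv act circ = \<Union>{M. M \<subseteq> FT 2 \<and> Iid sv \<inter> FT 2 \<subseteq> M \<and> gspan 0 (+) smul M = M
       \<and> (\<forall>a. \<forall>m\<in>M. actF act a m \<in> M) \<and> (\<forall>m\<in>M. Phi sv circ m = 0)}"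

text \<open>Lifts of K_{-i} = sum_{j=1}^{i-2} [F_{-j}, K_{-i+j}] (i >= 3), together with the relations.\<close>
inductive KK :: "('v, 'k::field) fv set \<Rightarrow> ('v, 'k) fv set \<Rightarrow> nat \<Rightarrow> ('v, 'k) fv \<Rightarrow> bool"
  for K2 :: "('v, 'k) fv set" and I :: "('v, 'k) fv set" where
  KK_two: "f \<in> K2 \<Longrightarrow> KK K2 I 2 f"
| KK_rel: "3 \<le> i \<Longrightarrow> f \<in> I \<Longrightarrow> f \<in> FT i \<Longrightarrow> KK K2 I i f"
| KK_br: "3 \<le> i \<Longrightarrow> 1 \<le> j \<Longrightarrow> j + 2 \<le> i \<Longrightarrow> p \<in> FT j \<Longrightarrow> KK K2 I (i - j) q \<Longrightarrow> KK K2 I i (brF p q)"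
| KK_add: "3 \<le> i \<Longrightarrow> KK K2 I i f \<Longrightarrow> KK K2 I i h \<Longrightarrow> KK K2 I i (f + h)"
| KK_smul: "3 \<le> i \<Longrightarrow> KK K2 I i f \<Longrightarrow> KK K2 I i (smul c f)"

text \<open>Kernel of F-tilde_{-i} -> T_{-i}.\<close>
definition Ndeg :: "('k::field \<Rightarrow> 'v \<Rightarrow> 'v::ab_group_add) \<Rightarrow> ('g \<Rightarrow> 'v \<Rightarrow> 'v) \<Rightarrow> ('v \<Rightarrow> 'v \<Rightarrow> 'v) \<Rightarrow> nat \<Rightarrow> ('v, 'k) fv set" where
  "Ndeg sv act circ i =
     (if 2 \<le> i then {f. KK (K2set sv act circ) (Iid sv) i f} else Iid sv \<inter> FT i)"

text \<open>Total kernel of F-tilde -> T_{<=-1}.\<close>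
definition Ntot :: "('k::field \<Rightarrow> 'v \<Rightarrow> 'v::ab_group_add) \<Rightarrow> ('g \<Rightarrow> 'v \<Rightarrow> 'v) \<Rightarrow> ('v \<Rightarrow> 'v \<Rightarrow> 'v) \<Rightarrow> ('v, 'k) fv set" where
  "Ntot sv act circ = gspan 0 (+) smul (\<Union>i. Ndeg sv act circ i)"

section \<open>The graded Lie algebra T_{<=-1} = F / K (elements are cosets)\<close>

definition cls :: "('v, 'k::field) fv set \<Rightarrow> ('v, 'k) fv \<Rightarrow> ('v, 'k) fv set" where
  "cls N f = {h. h - f \<in> N}"

definition rep :: "('v, 'k) fv set \<Rightarrow> ('v, 'k) fv" where
  "rep X = (SOME f. f \<in> X)"

definition Tsp :: "('v, 'k::field) fv set \<Rightarrow> nat \<Rightarrow> ('v, 'k) fv set set" where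
  "Tsp N i = cls N ` FT i"

definition addT :: "('v, 'k::field) fv set \<Rightarrow> ('v, 'k) fv set \<Rightarrow> ('v, 'k) fv set \<Rightarrow> ('v, 'k) fv set" where
  "addT N X Y = cls N (rep X + rep Y)"

definition smulT :: "('v, 'k::field) fv set \<Rightarrow> 'k \<Rightarrow> ('v, 'k) fv set \<Rightarrow> ('v, 'k) fv set" where
  "smulT N c X = cls N (smul c (rep X))"

definition brT :: "('v, 'k::field) fv set \<Rightarrow> ('v, 'k) fv set \<Rightarrow> ('v, 'k) fv set \<Rightarrow> ('v, 'k) fv set" where
  "brT N X Y = cls N (brF (rep X) (rep Y))"

definition actT :: "('g \<Rightarrow> 'v \<Rightarrow> 'v) \<Rightarrow> ('v, 'k::field) fv set \<Rightarrow> 'g \<Rightarrow> ('v, 'k) fv set \<Rightarrow> ('v, 'k) fv set" where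
  "actT act N a X = cls N (actF act a (rep X))"

definition iotaT :: "('v, 'k::field) fv set \<Rightarrow> 'v \<Rightarrow> ('v, 'k) fv set" where
  "iotaT N x = cls N (dl (Leaf x))"

section \<open>Hom(T_{-i-1}, T_{-i}) as a g-module; maps are normalised to the zero class
  outside T_{-i-1}\<close>

definition hext :: "('v, 'k::field) fv set \<Rightarrow> nat \<Rightarrow> (('v, 'k) fv set \<Rightarrow> ('v, 'k) fv set) \<Rightarrow> (('v, 'k) fv set \<Rightarrow> ('v, 'k) fv set)" where
  "hext N i phi = (\<lambda>X. if X \<in> Tsp N (i + 1) then phi X else N)"

definition hzero :: "('v, 'k::field) fv set \<Rightarrow> (('v, 'k) fv set \<Rightarrow> ('v, 'k) fv set)" where
  "hzero N = (\<lambda>X. N)"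

definition hadd :: "('v, 'k::field) fv set \<Rightarrow> nat \<Rightarrow> (('v, 'k) fv set \<Rightarrow> ('v, 'k) fv set) \<Rightarrow> (('v, 'k) fv set \<Rightarrow> ('v, 'k) fv set) \<Rightarrow> (('v, 'k) fv set \<Rightarrow> ('v, 'k) fv set)" where
  "hadd N i phi psi = hext N i (\<lambda>X. addT N (phi X) (psi X))"

definition hsmul :: "('v, 'k::field) fv set \<Rightarrow> nat \<Rightarrow> 'k \<Rightarrow> (('v, 'k) fv set \<Rightarrow> ('v, 'k) fv set) \<Rightarrow> (('v, 'k) fv set \<Rightarrow> ('v, 'k) fv set)" where
  "hsmul N i c phi = hext N i (\<lambda>X. smulT N c (phi X))"

definition hact :: "('g \<Rightarrow> 'v \<Rightarrow> 'v) \<Rightarrow> ('v, 'k::field) fv set \<Rightarrow> nat \<Rightarrow> 'g \<Rightarrow> (('v, 'k) fv set \<Rightarrow> ('v, 'k) fv set) \<Rightarrow> (('v, 'k) fv set \<Rightarrow> ('v, 'k) fv set)" where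
  "hact act N i a phi = hext N i (\<lambda>X. addT N (actT act N a (phi X)) (smulT N (-1) (phi (actT act N a X))))"

definition Rcyc :: "('g \<Rightarrow> 'v \<Rightarrow> 'v) \<Rightarrow> ('v, 'k::field) fv set \<Rightarrow> nat \<Rightarrow> (('v, 'k) fv set \<Rightarrow> ('v, 'k) fv set) \<Rightarrow> (('v, 'k) fv set \<Rightarrow> ('v, 'k) fv set) set" where
  "Rcyc act N i phi = gspan (hzero N) (hadd N i) (hsmul N i) {foldr (hact act N i) as phi | as. True}"

definition linear_T :: "('v, 'k::field) fv set \<Rightarrow> nat \<Rightarrow> (('v, 'k) fv set \<Rightarrow> ('v, 'k) fv set) \<Rightarrow> bool" where
  "linear_T N i phi \<longleftrightarrow> (\<forall>X\<in>Tsp N (i + 1). phi X \<in> Tsp N i)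
     \<and> (\<forall>X\<in>Tsp N (i + 1). \<forall>Y\<in>Tsp N (i + 1). phi (addT N X Y) = addT N (phi X) (phi Y))
     \<and> (\<forall>c. \<forall>X\<in>Tsp N (i + 1). phi (smulT N c X) = smulT N c (phi X))"

text \<open>D i stands for partial_{-i} : T_{-i-1} -> T_{-i}, i >= 1.\<close>
definition is_LL_differential ::
  "('k::field_char_0 \<Rightarrow> 'v \<Rightarrow> 'v::ab_group_add) \<Rightarrow> ('g \<Rightarrow> 'v \<Rightarrow> 'v) \<Rightarrow> ('v \<Rightarrow> 'v \<Rightarrow> 'v) \<Rightarrow> ('v \<Rightarrow> 'g) \<Rightarrow>
   (nat \<Rightarrow> ('v, 'k) fv set \<Rightarrow> ('v, 'k) fv set) \<Rightarrow> bool" where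
  "is_LL_differential sv act circ Theta D \<longleftrightarrow>
     (let N = Ntot sv act circ in
       (\<forall>i\<ge>1. linear_T N i (D i))
     \<and> (\<forall>i\<ge>1. \<forall>a\<in>range Theta. \<forall>X\<in>Tsp N (i + 1). D i (actT act N a X) = actT act N a (D i X))
     \<and> (\<forall>u v. D 1 (brT N (iotaT N u) (iotaT N v)) = iotaT N (sv 2 (symprod sv circ u v)))
     \<and> (\<forall>u. \<forall>i\<ge>2. \<forall>X\<in>Tsp N i.
          D i (brT N (iotaT N u) X)
            = addT N (actT act N (Theta u) X) (smulT N (-1) (brT N (iotaT N u) (D (i - 1) X))))
     \<and> (\<forall>i\<ge>2. \<forall>j\<ge>2. \<forall>X\<in>Tsp N i. \<forall>Y\<in>Tsp N j.
          D (i + j - 1) (brT N X Y)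
            = addT N (brT N (D (i - 1) X) Y) (smulT N ((-1) ^ i) (brT N X (D (j - 1) Y)))))"

end

theory Submission
  imports Defs
begin

(* For an arbitrary linear map Xi : V -> g, the identities characterising the differential can be
   read as a recursive definition on the trees spanning the free algebra F, with Theta replaced by
   Xi; extended linearly this gives maps d_Xi : F_{-i-1} -> F_{-i}. Modulo the kernel N of
   F -> T_{<=-1}, d_Xi is linear in Xi, and d_{a.Xi} = a.d_Xi - d_Xi(a._), because g acts on F by
   derivations and V is a g-module. Since d_Theta induces the differential on T, it maps N into N,
   and this property propagates along the generators of R_Theta. Hence mu_{-i}(Xi), the map
   induced by d_Xi on T_{-i-1}, is well defined on R_Theta; it is a g-module morphism sending
   Theta to the differential, so it maps the cyclic module R_Theta onto the cyclic module
   generated by the differential. *)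

definition fin_supp :: "('v, 'k::zero) fv \<Rightarrow> bool" where
  "fin_supp f \<longleftrightarrow> finite {t. f t \<noteq> 0}"

definition lin_ext :: "('k \<Rightarrow> 'a \<Rightarrow> 'a::ab_group_add) \<Rightarrow> ('v ltree \<Rightarrow> 'a) \<Rightarrow> ('v, 'k::zero) fv \<Rightarrow> 'a" where
  "lin_ext scale T f = (\<Sum>t\<in>{t. f t \<noteq> 0}. scale (f t) (T t))"

lemma smul_apply [simp]: "smul c f t = c * f t"
  by (simp add: smul_def)

interpretation fv: vector_space "smul :: 'k::field \<Rightarrow> ('v, 'k) fv \<Rightarrow> ('v, 'k) fv"
  by unfold_locales (simp_all add: fun_eq_iff algebra_simps)

lemma dl_apply: "dl t s = (if s = t then 1 else 0)"
  by (simp add: dl_def)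

lemma sum_apply: "sum F S x = (\<Sum>i\<in>S. F i x)"
  by (induct S rule: infinite_finite_induct) auto

lemma fin_supp_0 [simp]: "fin_supp 0"
  by (simp add: fin_supp_def)

lemma fin_supp_dl [simp]: "fin_supp (dl t :: ('v, 'k::zero_neq_one) fv)"
  unfolding fin_supp_def by (rule finite_subset[of _ "{t}"]) (auto simp: dl_def)

lemma fin_supp_add [simp]: "fin_supp f \<Longrightarrow> fin_supp g \<Longrightarrow> fin_supp (f + g :: ('v, 'k::monoid_add) fv)"
  unfolding fin_supp_def by (rule finite_subset[of _ "{t. f t \<noteq> 0} \<union> {t. g t \<noteq> 0}"]) auto

lemma fin_supp_uminus [simp]: "fin_supp (- f :: ('v, 'k::group_add) fv) = fin_supp f"
  by (simp add: fin_supp_def)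

lemma fin_supp_diff [simp]: "fin_supp f \<Longrightarrow> fin_supp g \<Longrightarrow> fin_supp (f - g :: ('v, 'k::group_add) fv)"
  unfolding fin_supp_def by (rule finite_subset[of _ "{t. f t \<noteq> 0} \<union> {t. g t \<noteq> 0}"]) auto

lemma fin_supp_smul [simp]: "fin_supp f \<Longrightarrow> fin_supp (smul c f :: ('v, 'k::field) fv)"
  unfolding fin_supp_def by (rule finite_subset[of _ "{t. f t \<noteq> 0}"]) auto

lemma fin_supp_sum [simp]: "(\<And>i. i \<in> S \<Longrightarrow> fin_supp (F i)) \<Longrightarrow> fin_supp (sum F S :: ('v, 'k::field) fv)"
  by (induct S rule: infinite_finite_induct) auto

lemma fin_supp_induct [consumes 1, case_names zero step]:
  assumes "fin_supp f" "P 0"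
    and step: "\<And>c s h. fin_supp h \<Longrightarrow> P h \<Longrightarrow> P (smul c (dl s) + h)"
  shows "P (f :: ('v, 'k::field) fv)"
proof -
  have "P f" if "finite S" "{t. f t \<noteq> 0} \<subseteq> S" for S and f :: "('v, 'k) fv"
    using that
  proof (induct S arbitrary: f rule: finite_induct)
    case empty
    then have "f = 0" by (intro ext) auto
    with \<open>P 0\<close> show ?case by (simp only:)
  next
    case (insert s S)
    let ?h = "f(s := 0)"
    have supp: "{t. ?h t \<noteq> 0} \<subseteq> S" using insert.prems by auto
    then have "fin_supp ?h" unfolding fin_supp_def using insert.hyps(1) finite_subset by blast
    moreover have "f = smul (f s) (dl s) + ?h" by (rule ext) (auto simp: dl_def)
    ultimately show ?case using step insert.hyps(3)[OF supp] by metis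
  qed
  then show ?thesis using assms(1) unfolding fin_supp_def by blast
qed

context vector_space
begin

lemma lin_ext_superset:
  assumes "finite S" "{t. f t \<noteq> 0} \<subseteq> S"
  shows "lin_ext scale T f = (\<Sum>t\<in>S. f t *s T t)"
  unfolding lin_ext_def by (rule sum.mono_neutral_left) (use assms in auto)

lemma lin_ext_add:
  assumes "fin_supp f" "fin_supp g"
  shows "lin_ext scale T (f + g) = lin_ext scale T f + lin_ext scale T g"
proof -
  let ?S = "{t. f t \<noteq> 0} \<union> {t. g t \<noteq> 0}"
  have fin: "finite ?S" using assms by (simp add: fin_supp_def)
  have "lin_ext scale T (f + g) = (\<Sum>t\<in>?S. (f + g) t *s T t)"
    by (rule lin_ext_superset[OF fin]) auto
  also have "\<dots> = (\<Sum>t\<in>?S. f t *s T t) + (\<Sum>t\<in>?S. g t *s T t)"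
    by (simp add: scale_left_distrib sum.distrib)
  also have "\<dots> = lin_ext scale T f + lin_ext scale T g"
    by (subst (1 2) lin_ext_superset[OF fin]) auto
  finally show ?thesis .
qed

lemma lin_ext_smul: "lin_ext scale T (smul c f) = c *s lin_ext scale T f"
proof (cases "c = 0")
  case False
  then have "{t. smul c f t \<noteq> 0} = {t. f t \<noteq> 0}" by auto
  then show ?thesis by (simp add: lin_ext_def scale_sum_right)
qed (simp add: lin_ext_def)

lemma lin_ext_0 [simp]: "lin_ext scale T 0 = 0"
  by (simp add: lin_ext_def)

lemma lin_ext_dl [simp]: "lin_ext scale T (dl t) = T t"
proof -
  have "{s. dl t s \<noteq> (0::'a)} = {t}" by (auto simp: dl_def)
  then show ?thesis by (simp add: lin_ext_def dl_def)
qed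

lemma lin_ext_uminus: "lin_ext scale T (- f) = - lin_ext scale T f"
  using lin_ext_smul[of T "-1" f] by (simp add: fun_eq_iff)

lemma lin_ext_diff:
  "fin_supp f \<Longrightarrow> fin_supp g \<Longrightarrow> lin_ext scale T (f - g) = lin_ext scale T f - lin_ext scale T g"
  using lin_ext_add[of f "- g" T] by (simp add: lin_ext_uminus)

lemma lin_ext_add_fun: "lin_ext scale (\<lambda>t. T t + T' t) f = lin_ext scale T f + lin_ext scale T' f"
  by (simp add: lin_ext_def scale_right_distrib sum.distrib)

lemma lin_ext_diff_fun: "lin_ext scale (\<lambda>t. T t - T' t) f = lin_ext scale T f - lin_ext scale T' f"
  by (simp add: lin_ext_def scale_right_diff_distrib sum_subtractf)

lemma lin_ext_smul_fun: "lin_ext scale (\<lambda>t. c *s T t) f = c *s lin_ext scale T f"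
  by (simp add: lin_ext_def scale_sum_right mult.commute)

end

lemma lin_ext_dl_self: "fin_supp f \<Longrightarrow> lin_ext smul dl f = (f :: ('v, 'k::field) fv)"
proof (rule ext)
  fix x assume "fin_supp f"
  have "lin_ext smul dl f x = (\<Sum>t\<in>{t. f t \<noteq> 0}. if t = x then f x else 0)"
    unfolding lin_ext_def sum_apply by (rule sum.cong) (auto simp: dl_def)
  also have "\<dots> = f x" using \<open>fin_supp f\<close> by (simp add: fin_supp_def)
  finally show "lin_ext smul dl f x = f x" .
qed

lemma fin_supp_lin_ext:
  "(\<And>t. fin_supp (T t)) \<Longrightarrow> fin_supp (lin_ext smul T (f :: ('v, 'k::field) fv) :: ('w, 'k) fv)"
  unfolding lin_ext_def by (intro fin_supp_sum fin_supp_smul)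

lemma lin_ext_comp_linear:
  fixes L :: "('v, 'k::field) fv \<Rightarrow> ('w, 'k) fv"
  assumes L_add: "\<And>x y. fin_supp x \<Longrightarrow> fin_supp y \<Longrightarrow> L (x + y) = L x + L y"
    and L_smul: "\<And>c x. fin_supp x \<Longrightarrow> L (smul c x) = smul c (L x)"
    and L_zero: "L 0 = 0"
    and fin: "\<And>t. fin_supp (T t)" "fin_supp f"
  shows "lin_ext smul (\<lambda>t. L (T t)) f = L (lin_ext smul T f)"
  using fin(2)
  \<comment> \<open>Inductions over elements of \<open>fv\<close> name the predicate explicitly: inferred from the goal, it
    comes out eta-expanded, and the simplifier then rewrites the combinations pointwise.\<close>
proof (induct rule: fin_supp_induct[where P="\<lambda>f. lin_ext smul (\<lambda>t. L (T t)) f = L (lin_ext smul T f)"])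
  case (step c s h)
  have "lin_ext smul (\<lambda>t. L (T t)) (smul c (dl s) + h) = smul c (L (T s)) + lin_ext smul (\<lambda>t. L (T t)) h"
    using step by (simp add: fv.lin_ext_add fv.lin_ext_smul)
  also have "\<dots> = L (lin_ext smul T (smul c (dl s) + h))"
    using step fin(1) by (simp add: fv.lin_ext_add fv.lin_ext_smul L_add L_smul fin_supp_lin_ext)
  finally show ?case .
qed (simp add: L_zero)

lemma brF_Node [simp]: "brF f g (Node s r) = f s * g r"
  and brF_Leaf [simp]: "brF f g (Leaf x) = 0"
  by (simp_all add: brF_def)

context
  fixes f g h :: "('v, 'k::field) fv"
begin

lemma brF_add_left [simp]: "brF (f + g) h = brF f h + brF g h"
  and brF_add_right [simp]: "brF h (f + g) = brF h f + brF h g"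
  and brF_diff_left [simp]: "brF (f - g) h = brF f h - brF g h"
  and brF_diff_right [simp]: "brF h (f - g) = brF h f - brF h g"
  and brF_uminus_left [simp]: "brF (- f) h = - brF f h"
  and brF_uminus_right [simp]: "brF h (- f) = - brF h f"
  and brF_smul_left [simp]: "brF (smul c f) h = smul c (brF f h)"
  and brF_smul_right [simp]: "brF h (smul c f) = smul c (brF h f)"
  and brF_0_left [simp]: "brF 0 h = 0"
  and brF_0_right [simp]: "brF h 0 = 0"
  by (auto simp: fun_eq_iff brF_def algebra_simps split: ltree.split)

end

lemma brF_dl [simp]: "brF (dl s) (dl t) = (dl (Node s t) :: ('v, 'k::field) fv)"
  by (auto simp: fun_eq_iff brF_def dl_def split: ltree.split)

lemma fin_supp_brF [simp]:
  assumes "fin_supp f" "fin_supp (g :: ('v, 'k::field) fv)"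
  shows "fin_supp (brF f g)"
proof -
  have "{t. brF f g t \<noteq> 0} \<subseteq> (\<lambda>(s, r). Node s r) ` ({t. f t \<noteq> 0} \<times> {t. g t \<noteq> 0})"
  proof
    fix t assume "t \<in> {t. brF f g t \<noteq> 0}"
    then show "t \<in> (\<lambda>(s, r). Node s r) ` ({t. f t \<noteq> 0} \<times> {t. g t \<noteq> 0})"
      by (cases t) auto
  qed
  with assms show ?thesis
    unfolding fin_supp_def by (meson finite_SigmaI finite_imageI finite_subset)
qed

lemma nlv_pos: "1 \<le> nlv t"
  by (induct t) auto

lemma nlv_eq_1_iff: "nlv t = 1 \<longleftrightarrow> (\<exists>u. t = Leaf u)"
proof (cases t)
  case (Node s r)
  then show ?thesis using nlv_pos[of s] nlv_pos[of r] by simp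
qed simp

lemma FT_induct [consumes 1, case_names zero base add smul]:
  assumes "f \<in> FT n" "P 0" "\<And>t. nlv t = n \<Longrightarrow> P (dl t)"
    "\<And>f g. f \<in> FT n \<Longrightarrow> g \<in> FT n \<Longrightarrow> P f \<Longrightarrow> P g \<Longrightarrow> P (f + g)"
    "\<And>c f. f \<in> FT n \<Longrightarrow> P f \<Longrightarrow> P (smul c f)"
  shows "P f"
  using assms(1) unfolding FT_def
proof (induct rule: gspan.induct)
  case gspan_zero
  show ?case by (rule assms(2))
next
  case (gspan_base x)
  then show ?case using assms(3) by auto
next
  case (gspan_add x y)
  then show ?case using assms(4) unfolding FT_def by blast
next
  case (gspan_smul x c)
  then show ?case using assms(5) unfolding FT_def by blast
qed

lemma FT_0 [simp]: "0 \<in> FT n"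
  and FT_dl: "nlv t = n \<Longrightarrow> dl t \<in> FT n"
  and FT_add: "f \<in> FT n \<Longrightarrow> g \<in> FT n \<Longrightarrow> f + g \<in> FT n"
  and FT_smul: "f \<in> FT n \<Longrightarrow> smul c f \<in> FT n"
  unfolding FT_def by (auto intro: gspan.intros)

lemma FT_uminus: "f \<in> FT n \<Longrightarrow> - f \<in> FT n"
  using FT_smul[of f n "-1"] by simp

lemma FT_diff: "f \<in> FT n \<Longrightarrow> g \<in> FT n \<Longrightarrow> f - g \<in> FT n"
  using FT_add[OF _ FT_uminus] by (metis diff_conv_add_uminus)

lemma FT_sum: "(\<And>i. i \<in> S \<Longrightarrow> F i \<in> FT n) \<Longrightarrow> sum F S \<in> FT n"
  by (induct S rule: infinite_finite_induct) (auto intro: FT_add)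

lemma FT_iff: "f \<in> FT n \<longleftrightarrow> fin_supp f \<and> (\<forall>t. f t \<noteq> 0 \<longrightarrow> nlv t = n)"
proof
  assume "f \<in> FT n"
  then show "fin_supp f \<and> (\<forall>t. f t \<noteq> 0 \<longrightarrow> nlv t = n)"
  proof (induct rule: FT_induct[where P="\<lambda>f. fin_supp f \<and> (\<forall>t. f t \<noteq> 0 \<longrightarrow> nlv t = n)"])
    case (add f g)
    then show ?case by (metis add.right_neutral fin_supp_add plus_fun_apply)
  qed (auto simp: dl_apply)
next
  assume f: "fin_supp f \<and> (\<forall>t. f t \<noteq> 0 \<longrightarrow> nlv t = n)"
  then have "lin_ext smul dl f \<in> FT n"
    unfolding lin_ext_def by (intro FT_sum FT_smul FT_dl) auto
  with f show "f \<in> FT n" by (simp add: lin_ext_dl_self)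
qed

lemma FT_fin_supp: "f \<in> FT n \<Longrightarrow> fin_supp f"
  by (simp add: FT_iff)

lemma brF_FT: "f \<in> FT i \<Longrightarrow> g \<in> FT j \<Longrightarrow> brF f g \<in> FT (i + j)"
proof (unfold FT_iff, intro conjI allI impI)
  fix t assume "fin_supp f \<and> (\<forall>t. f t \<noteq> 0 \<longrightarrow> nlv t = i)" "fin_supp g \<and> (\<forall>t. g t \<noteq> 0 \<longrightarrow> nlv t = j)"
    and "brF f g t \<noteq> 0"
  then show "nlv t = i + j" by (cases t) auto
qed auto

lemma actF_eq_lin_ext: "actF act a f = lin_ext smul (actTree act a) f"
  unfolding actF_def lin_ext_def ..

lemma actTree_FT: "(actTree act a t :: ('v, 'k::field) fv) \<in> FT (nlv t)"
proof (induct t)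
  case (Node s r)
  have "brF (actTree act a s) (dl r) + brF (dl s) (actTree act a r) \<in> (FT (nlv s + nlv r) :: ('v, 'k) fv set)"
    using brF_FT[OF Node(1) FT_dl[of r "nlv r"]] brF_FT[OF FT_dl[of s "nlv s"] Node(2)] by (intro FT_add) simp_all
  then show ?case by (simp only: actTree.simps nlv.simps)
qed (simp add: FT_dl)

lemma fin_supp_actTree [simp]: "fin_supp (actTree act a t)"
  by (rule FT_fin_supp[OF actTree_FT])

lemma actF_dl [simp]: "actF act a (dl t) = actTree act a t"
  and actF_0 [simp]: "actF act a 0 = 0"
  and actF_smul: "actF act a (smul c f) = smul c (actF act a f)"
  and actF_uminus: "actF act a (- f) = - actF act a f"
  by (simp_all add: actF_eq_lin_ext fv.lin_ext_smul fv.lin_ext_uminus)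

lemma actF_add: "fin_supp f \<Longrightarrow> fin_supp g \<Longrightarrow> actF act a (f + g) = actF act a f + actF act a g"
  and actF_diff: "fin_supp f \<Longrightarrow> fin_supp g \<Longrightarrow> actF act a (f - g) = actF act a f - actF act a g"
  by (simp_all add: actF_eq_lin_ext fv.lin_ext_add fv.lin_ext_diff)

lemma actF_FT: "(f :: ('v, 'k::field) fv) \<in> FT n \<Longrightarrow> actF act a f \<in> FT n"
  by (induct rule: FT_induct[where P="\<lambda>f. actF act a f \<in> FT n"])
    (auto simp: actF_add actF_smul FT_fin_supp intro: FT_add FT_smul actTree_FT[of act a, simplified])

lemma actF_brF:
  assumes "fin_supp f" "fin_supp g"
  shows "actF act a (brF f g) = brF (actF act a f) g + brF f (actF act a g)"
proof -
  have dl_left: "actF act a (brF (dl s) g) = brF (actTree act a s) g + brF (dl s) (actF act a g)" for s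
    using assms(2)
    by (induct rule: fin_supp_induct[where P="\<lambda>g. actF act a (brF (dl s) g) = brF (actTree act a s) g + brF (dl s) (actF act a g)"])
      (simp_all add: actF_add actF_smul fv.scale_right_distrib)
  from assms(1) show ?thesis
    by (induct rule: fin_supp_induct[where P="\<lambda>f. actF act a (brF f g) = brF (actF act a f) g + brF f (actF act a g)"])
      (simp_all add: actF_add actF_smul dl_left assms(2) fv.scale_right_distrib)
qed

lemma sgnk_mult_self [simp]: "sgnk n * sgnk n = (1::'k::field)"
  by (simp add: sgnk_def power_mult_distrib[symmetric])

lemma sgnk_Suc_0 [simp]: "sgnk (Suc 0) = (-1::'k::field)"
  by (simp add: sgnk_def)

lemma Iid_fin_supp: "f \<in> Iid sv \<Longrightarrow> fin_supp f"
  by (induct rule: Iid.induct[where P="\<lambda>f. fin_supp f"]) (auto simp: relgens_def)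

lemma Iid_brF_left:
  assumes "fin_supp g" "f \<in> Iid sv"
  shows "brF g f \<in> Iid sv"
  using assms(1)
  by (induct rule: fin_supp_induct[where P="\<lambda>g. brF g f \<in> Iid sv"])
    (use assms(2) in \<open>simp_all add: Iid_zero Iid_add Iid_smul Iid_brl\<close>)

lemma Iid_brF_right:
  assumes "fin_supp g" "f \<in> Iid sv"
  shows "brF f g \<in> Iid sv"
  using assms(1)
  by (induct rule: fin_supp_induct[where P="\<lambda>g. brF f g \<in> Iid sv"])
    (use assms(2) in \<open>simp_all add: Iid_zero Iid_add Iid_smul Iid_brr\<close>)

lemma antisym_Iid:
  assumes "(f :: ('v, 'k::field) fv) \<in> FT j"
  shows "brF f (dl s) + smul (sgnk (j * nlv s)) (brF (dl s) f) \<in> Iid (sv :: 'k \<Rightarrow> 'v::ab_group_add \<Rightarrow> 'v)"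
  using assms
proof (induct rule: FT_induct[where P="\<lambda>f. brF f (dl s) + smul (sgnk (j * nlv s)) (brF (dl s) f) \<in> Iid sv"])
  case (base t)
  have "brF (dl t) (dl s) + smul (sgnk (nlv t * nlv s)) (brF (dl s) (dl t)) \<in> relgens sv"
    unfolding relgens_def by blast
  with base show ?case by (simp add: Iid_gen)
next
  case (add f g)
  then show ?case
    using Iid_add[OF add(3,4)] by (simp add: fv.scale_right_distrib algebra_simps)
next
  case (smul c f)
  then show ?case
    using Iid_smul[OF smul(2), of c] by (simp add: fv.scale_right_distrib mult.commute)
qed (simp add: Iid_zero)

definition jacobiator :: "nat \<Rightarrow> nat \<Rightarrow> ('v, 'k::field) fv \<Rightarrow> ('v, 'k) fv \<Rightarrow> ('v, 'k) fv \<Rightarrow> ('v, 'k) fv" where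
  "jacobiator p q f g h = brF f (brF g h) - brF (brF f g) h - smul (sgnk (p * q)) (brF g (brF f h))"

lemma jacobiator_add:
  "jacobiator p q (f + f') g h = jacobiator p q f g h + jacobiator p q f' g h"
  "jacobiator p q f (g + g') h = jacobiator p q f g h + jacobiator p q f g' h"
  "jacobiator p q f g (h + h') = jacobiator p q f g h + jacobiator p q f g h'"
  by (simp_all add: jacobiator_def fv.scale_right_distrib algebra_simps)

lemma jacobiator_smul:
  "jacobiator p q (smul c f) g h = smul c (jacobiator p q f g h)"
  "jacobiator p q f (smul c g) h = smul c (jacobiator p q f g h)"
  "jacobiator p q f g (smul c h) = smul c (jacobiator p q f g h)"
  by (simp_all add: jacobiator_def fv.scale_right_diff_distrib mult.commute)

lemma jacobiator_zero [simp]: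
  "jacobiator p q 0 g h = 0" "jacobiator p q f 0 h = 0" "jacobiator p q f g 0 = 0"
  by (simp_all add: jacobiator_def)

lemma jacobiator_Iid:
  assumes "(f :: ('v, 'k::field) fv) \<in> FT p" "g \<in> FT q" "h \<in> FT r"
  shows "jacobiator p q f g h \<in> Iid (sv :: 'k \<Rightarrow> 'v::ab_group_add \<Rightarrow> 'v)"
proof -
  have trees: "jacobiator p q (dl s) (dl t) h \<in> Iid sv" if "nlv s = p" "nlv t = q" for s t
    using assms(3)
  proof (induct rule: FT_induct[where P="\<lambda>h. jacobiator p q (dl s) (dl t) h \<in> Iid sv"])
    case (base u)
    have "jacobiator (nlv s) (nlv t) (dl s) (dl t) (dl u) \<in> relgens sv"
      unfolding relgens_def jacobiator_def by blast
    with that show ?case by (simp add: Iid_gen)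
  qed (simp_all add: jacobiator_add jacobiator_smul Iid_zero Iid_add Iid_smul)
  have tree: "jacobiator p q (dl s) g h \<in> Iid sv" if "nlv s = p" for s
    using assms(2)
    by (induct rule: FT_induct[where P="\<lambda>g. jacobiator p q (dl s) g h \<in> Iid sv"])
      (simp_all add: that trees jacobiator_add jacobiator_smul Iid_zero Iid_add Iid_smul)
  show ?thesis
    using assms(1)
    by (induct rule: FT_induct[where P="\<lambda>f. jacobiator p q f g h \<in> Iid sv"])
      (simp_all add: tree jacobiator_add jacobiator_smul Iid_zero Iid_add Iid_smul)
qed

lemma actF_relgens_Iid:
  fixes sv :: "'k::field \<Rightarrow> 'v \<Rightarrow> 'v::ab_group_add" and act :: "'g \<Rightarrow> 'v \<Rightarrow> 'v"
  assumes act_linear: "\<And>a c x y. act a (sv c x + y) = sv c (act a x) + act a y"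
    and "f \<in> relgens sv"
  shows "actF act a f \<in> Iid sv"
proof -
  from assms(2) consider (linear) c x y where "f = dl (Leaf (sv c x + y)) - smul c (dl (Leaf x)) - dl (Leaf y)"
    | (antisym) s t where "f = brF (dl s) (dl t) + smul (sgnk (nlv s * nlv t)) (brF (dl t) (dl s))"
    | (jacobi) s t r where "f = jacobiator (nlv s) (nlv t) (dl s) (dl t) (dl r)"
    unfolding relgens_def jacobiator_def by blast
  then show ?thesis
  proof cases
    case linear
    have "actF act a f = dl (Leaf (sv c (act a x) + act a y)) - smul c (dl (Leaf (act a x))) - dl (Leaf (act a y))"
      using linear by (simp add: actF_diff actF_smul act_linear)
    also have "\<dots> \<in> relgens sv" unfolding relgens_def by blast
    finally show ?thesis by (rule Iid.Iid_gen)
  next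
    case antisym
    let ?\<epsilon> = "sgnk (nlv s * nlv t) :: 'k"
    have "actF act a f = (brF (actTree act a s) (dl t) + smul ?\<epsilon> (brF (dl t) (actTree act a s)))
       + smul ?\<epsilon> (brF (actTree act a t) (dl s) + smul (sgnk (nlv t * nlv s)) (brF (dl s) (actTree act a t)))"
      unfolding antisym by (simp add: actF_add actF_smul actF_brF fv.scale_right_distrib algebra_simps mult.commute)
    then show ?thesis
      using antisym_Iid[OF actTree_FT, of act a s t sv] antisym_Iid[OF actTree_FT, of act a t s sv]
      by (metis Iid.Iid_add Iid.Iid_smul)
  next
    case jacobi
    have "actF act a f = jacobiator (nlv s) (nlv t) (actTree act a s) (dl t) (dl r)
        + jacobiator (nlv s) (nlv t) (dl s) (actTree act a t) (dl r)
        + jacobiator (nlv s) (nlv t) (dl s) (dl t) (actTree act a r)"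
      unfolding jacobi jacobiator_def
      by (simp add: actF_add actF_diff actF_smul actF_brF fv.scale_right_distrib fv.scale_right_diff_distrib algebra_simps)
    moreover have "jacobiator (nlv s) (nlv t) (actTree act a s) (dl t) (dl r) \<in> Iid sv"
      by (rule jacobiator_Iid[OF actTree_FT FT_dl FT_dl]) simp_all
    moreover have "jacobiator (nlv s) (nlv t) (dl s) (actTree act a t) (dl r) \<in> Iid sv"
      by (rule jacobiator_Iid[OF FT_dl actTree_FT FT_dl]) simp_all
    moreover have "jacobiator (nlv s) (nlv t) (dl s) (dl t) (actTree act a r) \<in> Iid sv"
      by (rule jacobiator_Iid[OF FT_dl FT_dl actTree_FT]) simp_all
    ultimately show ?thesis by (metis Iid.Iid_add)
  qed
qed

lemma actF_Iid:
  fixes sv :: "'k::field \<Rightarrow> 'v \<Rightarrow> 'v::ab_group_add" and act :: "'g \<Rightarrow> 'v \<Rightarrow> 'v"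
  assumes act_linear: "\<And>a c x y. act a (sv c x + y) = sv c (act a x) + act a y"
    and "f \<in> Iid sv"
  shows "actF act a f \<in> Iid sv"
  using assms(2)
proof (induct rule: Iid.induct[where P="\<lambda>f. actF act a f \<in> Iid sv"])
  case (Iid_gen f)
  show ?case by (rule actF_relgens_Iid[where act=act and sv=sv, OF act_linear Iid_gen])
next
  case (Iid_add f h)
  then show ?case by (simp add: actF_add Iid_fin_supp Iid.Iid_add)
next
  case (Iid_brl f p)
  then show ?case
    by (simp add: actF_brF Iid_fin_supp Iid.Iid_add Iid.Iid_brl Iid_brF_left)
next
  case (Iid_brr f p)
  then show ?case
    by (simp add: actF_brF Iid_fin_supp Iid.Iid_add Iid.Iid_brr Iid_brF_right)
qed (simp_all add: actF_smul Iid.Iid_zero Iid.Iid_smul)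

text \<open>The functional of interest is \<open>phiT\<close>; the wider class is closed under \<open>l \<mapsto> l (Node p _)\<close>
  and \<open>l \<mapsto> l (Node _ p)\<close>, which the induction over the ideal of relations needs.\<close>

definition sym_quadratic_functional :: "('k::field \<Rightarrow> 'v \<Rightarrow> 'v::ab_group_add) \<Rightarrow> ('v ltree \<Rightarrow> 'v) \<Rightarrow> bool" where
  "sym_quadratic_functional sv l \<longleftrightarrow> (\<forall>t. 3 \<le> nlv t \<longrightarrow> l t = 0)
     \<and> (\<forall>c x y. l (Leaf (sv c x + y)) = sv c (l (Leaf x)) + l (Leaf y))
     \<and> (\<forall>u v. l (Node (Leaf u) (Leaf v)) = l (Node (Leaf v) (Leaf u)))
     \<and> (\<forall>u c x y. l (Node (Leaf u) (Leaf (sv c x + y)))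
                    = sv c (l (Node (Leaf u) (Leaf x))) + l (Node (Leaf u) (Leaf y)))"

context vector_space
begin

lemma lin_ext_brF_dl_left:
  "fin_supp f \<Longrightarrow> lin_ext scale l (brF (dl p) f) = lin_ext scale (\<lambda>r. l (Node p r)) f"
  by (induct rule: fin_supp_induct[where P="\<lambda>f. lin_ext scale l (brF (dl p) f) = lin_ext scale (\<lambda>r. l (Node p r)) f"])
    (simp_all add: lin_ext_add lin_ext_smul)

lemma lin_ext_brF_dl_right:
  "fin_supp f \<Longrightarrow> lin_ext scale l (brF f (dl p)) = lin_ext scale (\<lambda>r. l (Node r p)) f"
  by (induct rule: fin_supp_induct[where P="\<lambda>f. lin_ext scale l (brF f (dl p)) = lin_ext scale (\<lambda>r. l (Node r p)) f"])
    (simp_all add: lin_ext_add lin_ext_smul)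

lemma sym_quadratic_functional_Node_left:
  assumes l: "sym_quadratic_functional scale l"
  shows "sym_quadratic_functional scale (\<lambda>r. l (Node p r))"
proof -
  have high: "l (Node p r) = 0" if "3 \<le> nlv p + nlv r" for r
    using l that unfolding sym_quadratic_functional_def by simp
  have "l (Node p (Leaf (c *s x + y))) = c *s l (Node p (Leaf x)) + l (Node p (Leaf y))" for c x y
  proof (cases p)
    case (Node p1 p2)
    then show ?thesis using high nlv_pos[of p1] nlv_pos[of p2] by simp
  qed (use l in \<open>simp add: sym_quadratic_functional_def\<close>)
  then show ?thesis
    unfolding sym_quadratic_functional_def using high nlv_pos[of p] by (simp add: nlv_pos add_increasing2)
qed

lemma sym_quadratic_functional_Node_right:
  assumes l: "sym_quadratic_functional scale l"
  shows "sym_quadratic_functional scale (\<lambda>r. l (Node r p))"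
proof -
  have high: "l (Node r p) = 0" if "3 \<le> nlv r + nlv p" for r
    using l that unfolding sym_quadratic_functional_def by simp
  have "l (Node (Leaf (c *s x + y)) p) = c *s l (Node (Leaf x) p) + l (Node (Leaf y) p)" for c x y
  proof (cases p)
    case (Leaf u)
    then show ?thesis using l unfolding sym_quadratic_functional_def by metis
  next
    case (Node p1 p2)
    then show ?thesis using high nlv_pos[of p1] nlv_pos[of p2] by simp
  qed
  then show ?thesis
    unfolding sym_quadratic_functional_def using high nlv_pos[of p] by (simp add: nlv_pos add_increasing)
qed

lemma lin_ext_relgens:
  assumes "f \<in> relgens scale" and l: "sym_quadratic_functional scale l"
  shows "lin_ext scale l f = 0"
proof -
  have high: "l t = 0" if "3 \<le> nlv t" for t
    using l that unfolding sym_quadratic_functional_def by simp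
  from assms(1) consider
      (linear) c x y where "f = dl (Leaf (c *s x + y)) - smul c (dl (Leaf x)) - dl (Leaf y)"
    | (antisym) s t where "f = brF (dl s) (dl t) + smul (sgnk (nlv s * nlv t)) (brF (dl t) (dl s))"
    | (jacobi) s t r where "f = brF (dl s) (brF (dl t) (dl r)) - brF (brF (dl s) (dl t)) (dl r)
        - smul (sgnk (nlv s * nlv t)) (brF (dl t) (brF (dl s) (dl r)))"
    unfolding relgens_def by blast
  then show ?thesis
  proof cases
    case linear
    show ?thesis using l unfolding linear
      by (simp add: sym_quadratic_functional_def lin_ext_diff lin_ext_smul)
  next
    case antisym
    show ?thesis
    proof (cases "3 \<le> nlv s + nlv t")
      case True
      then show ?thesis using high unfolding antisym by (simp add: lin_ext_add lin_ext_smul add.commute)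
    next
      case False
      then have "nlv s = 1" "nlv t = 1" using nlv_pos[of s] nlv_pos[of t] by linarith+
      then obtain u v where "s = Leaf u" "t = Leaf v" using nlv_eq_1_iff by metis
      then show ?thesis using l unfolding antisym
        by (simp add: sym_quadratic_functional_def lin_ext_diff)
    qed
  next
    case jacobi
    show ?thesis unfolding jacobi
      using high[of "Node s (Node t r)"] high[of "Node (Node s t) r"] high[of "Node t (Node s r)"]
        nlv_pos[of s] nlv_pos[of t] nlv_pos[of r]
      by (simp add: lin_ext_diff lin_ext_smul)
  qed
qed

lemma lin_ext_Iid:
  assumes "f \<in> Iid scale" "sym_quadratic_functional scale l"
  shows "lin_ext scale l f = 0"
proof -
  have "\<forall>l. sym_quadratic_functional scale l \<longrightarrow> lin_ext scale l f = 0"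
    using assms(1)
  proof (induct rule: Iid.induct[where P="\<lambda>f. \<forall>l. sym_quadratic_functional scale l \<longrightarrow> lin_ext scale l f = 0"])
    case (Iid_gen f)
    then show ?case using lin_ext_relgens by blast
  next
    case (Iid_add f h)
    then show ?case by (simp add: lin_ext_add Iid_fin_supp)
  next
    case (Iid_smul f c)
    then show ?case by (simp add: lin_ext_smul)
  next
    case (Iid_brl f p)
    then show ?case by (simp add: lin_ext_brF_dl_left Iid_fin_supp sym_quadratic_functional_Node_left)
  next
    case (Iid_brr f p)
    then show ?case by (simp add: lin_ext_brF_dl_right Iid_fin_supp sym_quadratic_functional_Node_right)
  qed simp
  with assms(2) show ?thesis by blast
qed

end

lemma Phi_Iid:
  fixes sv :: "'k::field \<Rightarrow> 'v \<Rightarrow> 'v::ab_group_add"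
  assumes "leibniz_algebra sv circ" "f \<in> Iid sv"
  shows "Phi sv circ f = 0"
proof -
  interpret V: vector_space sv
    using assms(1) by (simp add: leibniz_algebra_def)
  have circ_linear: "circ x (sv c y + z) = sv c (circ x y) + circ x z"
    "circ (sv c y + z) x = sv c (circ y x) + circ z x" for x y z c
    using assms(1) unfolding leibniz_algebra_def by simp_all
  have "sym_quadratic_functional sv (phiT sv circ)"
    unfolding sym_quadratic_functional_def
  proof (intro conjI allI impI)
    fix t :: "'v ltree" assume "3 \<le> nlv t"
    then show "phiT sv circ t = 0"
      by (cases "(sv, circ, t)" rule: phiT.cases) auto
  next
    fix u v
    show "phiT sv circ (Node (Leaf u) (Leaf v)) = phiT sv circ (Node (Leaf v) (Leaf u))"
      by (simp add: symprod_def add.commute)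
  next
    fix u c x y
    show "phiT sv circ (Node (Leaf u) (Leaf (sv c x + y)))
      = sv c (phiT sv circ (Node (Leaf u) (Leaf x))) + phiT sv circ (Node (Leaf u) (Leaf y))"
      by (simp add: symprod_def circ_linear V.scale_right_distrib)
  qed simp
  then show ?thesis
    using V.lin_ext_Iid[OF assms(2)] by (simp add: Phi_def lin_ext_def)
qed

section \<open>Lifting the differential to the free algebra\<close>

lemma ltree_shape_induct [case_names Leaf Leaf_Leaf Leaf_Node Node_Leaf Node_Node]:
  assumes "\<And>x. P (Leaf x)"
    and "\<And>u v. P (Node (Leaf u) (Leaf v))"
    and "\<And>u T. 2 \<le> nlv T \<Longrightarrow> P T \<Longrightarrow> P (Node (Leaf u) T)"
    and "\<And>T v. 2 \<le> nlv T \<Longrightarrow> P (Node (Leaf v) T) \<Longrightarrow> P (Node T (Leaf v))"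
    and "\<And>X Y. 2 \<le> nlv X \<Longrightarrow> 2 \<le> nlv Y \<Longrightarrow> P X \<Longrightarrow> P Y \<Longrightarrow> P (Node X Y)"
  shows "P t"
proof (induct t)
  case (Node s r)
  have two: "2 \<le> nlv (Node a b)" for a b
    using nlv_pos[of a] nlv_pos[of b] by simp
  from Node show ?case
    by (cases s; cases r) (blast intro: assms(2-5) two)+
qed (rule assms(1))

text \<open>\<open>d_tree act \<Xi>\<close> is \<open>\<partial>\<close> lifted to trees, with \<open>\<Theta>\<close> replaced by an arbitrary \<open>\<Xi>\<close>: the clauses
  are the defining identities of \<open>\<partial>\<close> (for two leaves, \<open>2{u,v} = \<Theta>(u)\<cdot>v + \<Theta>(v)\<cdot>u\<close>), and a tree
  whose right factor is a leaf is first reordered by graded antisymmetry.\<close>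

fun d_tree :: "('g \<Rightarrow> 'v \<Rightarrow> 'v) \<Rightarrow> ('v \<Rightarrow> 'g) \<Rightarrow> 'v ltree \<Rightarrow> ('v, 'k::field) fv" where
  "d_tree act Xi (Leaf x) = 0"
| "d_tree act Xi (Node (Leaf u) (Leaf v)) = dl (Leaf (act (Xi u) v)) + dl (Leaf (act (Xi v) u))"
| "d_tree act Xi (Node (Leaf u) (Node s t)) =
     actTree act (Xi u) (Node s t) - brF (dl (Leaf u)) (d_tree act Xi (Node s t))"
| "d_tree act Xi (Node (Node s t) (Leaf v)) = smul (- sgnk (nlv (Node s t)))
     (actTree act (Xi v) (Node s t) - brF (dl (Leaf v)) (d_tree act Xi (Node s t)))"
| "d_tree act Xi (Node (Node a b) (Node c d)) = brF (d_tree act Xi (Node a b)) (dl (Node c d))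
     + smul (sgnk (nlv (Node a b))) (brF (dl (Node a b)) (d_tree act Xi (Node c d)))"

definition d_free :: "('g \<Rightarrow> 'v \<Rightarrow> 'v) \<Rightarrow> ('v \<Rightarrow> 'g) \<Rightarrow> ('v, 'k::field) fv \<Rightarrow> ('v, 'k) fv" where
  "d_free act Xi f = lin_ext smul (d_tree act Xi) f"

lemma d_tree_Leaf_Node:
  "2 \<le> nlv T \<Longrightarrow> d_tree act Xi (Node (Leaf u) T) = actTree act (Xi u) T - brF (dl (Leaf u)) (d_tree act Xi T)"
  by (cases T) auto

lemma d_tree_Node_Leaf:
  "2 \<le> nlv T \<Longrightarrow> d_tree act Xi (Node T (Leaf v)) = smul (- sgnk (nlv T)) (d_tree act Xi (Node (Leaf v) T))"
  by (cases T) auto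

lemma d_tree_Node_Node:
  "2 \<le> nlv X \<Longrightarrow> 2 \<le> nlv Y \<Longrightarrow>
    d_tree act Xi (Node X Y) = brF (d_tree act Xi X) (dl Y) + smul (sgnk (nlv X)) (brF (dl X) (d_tree act Xi Y))"
  by (cases X; cases Y) auto

lemma d_tree_FT: "(d_tree act Xi t :: ('v, 'k::field) fv) \<in> FT (nlv t - 1)"
proof (induct t rule: ltree_shape_induct[where P="\<lambda>t. d_tree act Xi t \<in> FT (nlv t - 1)"])
  case (Leaf_Leaf u v)
  then show ?case by (simp add: FT_add FT_dl)
next
  case (Leaf_Node u T)
  have "brF (dl (Leaf u)) (d_tree act Xi T) \<in> (FT (1 + (nlv T - 1)) :: ('v, 'k) fv set)"
    by (rule brF_FT[OF FT_dl Leaf_Node(2)]) simp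
  with Leaf_Node(1) show ?case
    by (simp add: d_tree_Leaf_Node FT_diff actTree_FT)
next
  case (Node_Leaf T v)
  then show ?case by (simp add: d_tree_Node_Leaf FT_smul FT_uminus)
next
  case (Node_Node X Y)
  have "brF (d_tree act Xi X) (dl Y) \<in> (FT ((nlv X - 1) + nlv Y) :: ('v, 'k) fv set)"
    "brF (dl X) (d_tree act Xi Y) \<in> (FT (nlv X + (nlv Y - 1)) :: ('v, 'k) fv set)"
    by (rule brF_FT[OF Node_Node(3) FT_dl], simp, rule brF_FT[OF FT_dl Node_Node(4)], simp)
  with Node_Node(1,2) show ?case
    by (simp add: d_tree_Node_Node FT_add FT_smul)
qed simp

lemma fin_supp_d_tree [simp]: "fin_supp (d_tree act Xi t :: ('v, 'k::field) fv)"
  by (rule FT_fin_supp[OF d_tree_FT])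

lemma fin_supp_d_free [simp]: "fin_supp (d_free act Xi f)"
  by (simp add: d_free_def fin_supp_lin_ext)

lemma d_free_dl [simp]: "d_free act Xi (dl t) = d_tree act Xi t"
  and d_free_0 [simp]: "d_free act Xi 0 = 0"
  and d_free_smul: "d_free act Xi (smul c f) = smul c (d_free act Xi f)"
  by (simp_all add: d_free_def fv.lin_ext_smul)

lemma d_free_add: "fin_supp f \<Longrightarrow> fin_supp g \<Longrightarrow> d_free act Xi (f + g) = d_free act Xi f + d_free act Xi g"
  and d_free_diff: "fin_supp f \<Longrightarrow> fin_supp g \<Longrightarrow> d_free act Xi (f - g) = d_free act Xi f - d_free act Xi g"
  by (simp_all add: d_free_def fv.lin_ext_add fv.lin_ext_diff)

lemma d_free_brF_Leaf_left:
  assumes "f \<in> FT n" "2 \<le> n"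
  shows "d_free act Xi (brF (dl (Leaf v)) f) = actF act (Xi v) f - brF (dl (Leaf v)) (d_free act Xi f)"
  using assms(1)
  by (induct rule: FT_induct[where P="\<lambda>f. d_free act Xi (brF (dl (Leaf v)) f) = actF act (Xi v) f - brF (dl (Leaf v)) (d_free act Xi f)"])
    (use assms(2) in \<open>simp_all add: d_tree_Leaf_Node d_free_add d_free_smul actF_add actF_smul
      FT_fin_supp fv.scale_right_diff_distrib\<close>)

lemma d_free_brF_Leaf_right:
  assumes "f \<in> FT n" "2 \<le> n"
  shows "d_free act Xi (brF f (dl (Leaf v))) = smul (- sgnk n) (d_free act Xi (brF (dl (Leaf v)) f))"
  using assms(1)
  by (induct rule: FT_induct[where P="\<lambda>f. d_free act Xi (brF f (dl (Leaf v))) = smul (- sgnk n) (d_free act Xi (brF (dl (Leaf v)) f))"])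
    (use assms(2) in \<open>simp_all add: d_tree_Node_Leaf d_free_add d_free_smul FT_fin_supp
      fv.scale_right_distrib mult.commute\<close>)

lemma d_free_brF:
  assumes "f \<in> FT p" "g \<in> FT q" "2 \<le> p" "2 \<le> q"
  shows "d_free act Xi (brF f g) = brF (d_free act Xi f) g + smul (sgnk p) (brF f (d_free act Xi g))"
proof -
  have tree: "d_free act Xi (brF (dl s) g) = brF (d_tree act Xi s) g + smul (sgnk p) (brF (dl s) (d_free act Xi g))"
    if "nlv s = p" for s
    using assms(2)
    by (induct rule: FT_induct[where P="\<lambda>g. d_free act Xi (brF (dl s) g) = brF (d_tree act Xi s) g + smul (sgnk p) (brF (dl s) (d_free act Xi g))"])
      (use that assms(3,4) in \<open>simp_all add: d_tree_Node_Node d_free_add d_free_smul FT_fin_supp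
        fv.scale_right_distrib mult.commute\<close>)
  from assms(1) show ?thesis
    by (induct rule: FT_induct[where P="\<lambda>f. d_free act Xi (brF f g) = brF (d_free act Xi f) g + smul (sgnk p) (brF f (d_free act Xi g))"])
      (use assms(2) in \<open>simp_all add: tree d_free_add d_free_smul FT_fin_supp fv.scale_right_distrib mult.commute\<close>)
qed

locale lie_leibniz =
  fixes sg :: "'k::field_char_0 \<Rightarrow> 'g \<Rightarrow> 'g::ab_group_add"
    and br :: "'g \<Rightarrow> 'g \<Rightarrow> 'g"
    and sv :: "'k \<Rightarrow> 'v \<Rightarrow> 'v::ab_group_add"
    and act :: "'g \<Rightarrow> 'v \<Rightarrow> 'v"
    and circ :: "'v \<Rightarrow> 'v \<Rightarrow> 'v"
    and Theta :: "'v \<Rightarrow> 'g"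
  assumes triple: "lie_leibniz_triple sg br sv act circ Theta"
begin

lemma vector_space_sg: "vector_space sg"
  and vector_space_sv: "vector_space sv"
  and leibniz: "leibniz_algebra sv circ"
  using triple unfolding lie_leibniz_triple_def lie_algebra_def lie_module_def by blast+

interpretation G: vector_space sg by (rule vector_space_sg)
interpretation V: vector_space sv by (rule vector_space_sv)

lemma circ_eq_act: "circ x y = act (Theta x) y"
  using triple unfolding lie_leibniz_triple_def by blast

lemma act_add_left: "act (a + b) x = act a x + act b x"
  and act_add_right: "act a (x + y) = act a x + act a y"
  and act_scale_left: "act (sg c a) x = sv c (act a x)"
  and act_scale_right: "act a (sv c x) = sv c (act a x)"
  and act_br: "act (br a b) x = act a (act b x) - act b (act a x)"
  using triple unfolding lie_leibniz_triple_def lie_module_def by blast+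

lemma act_diff_left: "act (a - b) x = act a x - act b x"
  using act_add_left[of "a - b" b x] by (simp add: algebra_simps)

abbreviation N :: "('v, 'k) fv set" where
  "N \<equiv> Ntot sv act circ"

abbreviation K2 :: "('v, 'k) fv set" where
  "K2 \<equiv> K2set sv act circ"

lemma N_0 [simp]: "0 \<in> N"
  and N_add: "f \<in> N \<Longrightarrow> g \<in> N \<Longrightarrow> f + g \<in> N"
  and N_smul: "f \<in> N \<Longrightarrow> smul c f \<in> N"
  and N_Ndeg: "f \<in> Ndeg sv act circ i \<Longrightarrow> f \<in> N"
  unfolding Ntot_def by (auto intro: gspan.intros)

lemma N_uminus: "f \<in> N \<Longrightarrow> - f \<in> N"
  using N_smul[of f "-1"] by simp

lemma N_diff: "f \<in> N \<Longrightarrow> g \<in> N \<Longrightarrow> f - g \<in> N"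
  using N_add[OF _ N_uminus] by (metis diff_conv_add_uminus)

lemma N_induct [consumes 1, case_names zero base add smul]:
  assumes "f \<in> N" "P 0" "\<And>i f. f \<in> Ndeg sv act circ i \<Longrightarrow> P f"
    "\<And>f g. f \<in> N \<Longrightarrow> g \<in> N \<Longrightarrow> P f \<Longrightarrow> P g \<Longrightarrow> P (f + g)"
    "\<And>c f. f \<in> N \<Longrightarrow> P f \<Longrightarrow> P (smul c f)"
  shows "P f"
  using assms(1) unfolding Ntot_def
proof (induct rule: gspan.induct)
  case gspan_zero
  show ?case by (rule assms(2))
next
  case (gspan_base x)
  then show ?case using assms(3) by blast
next
  case (gspan_add x y)
  then show ?case using assms(4) unfolding Ntot_def by blast
next
  case (gspan_smul x c)
  then show ?case using assms(5) unfolding Ntot_def by blast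
qed

lemma actF_Iid_sv: "f \<in> Iid sv \<Longrightarrow> actF act a f \<in> Iid sv"
  by (rule actF_Iid) (simp_all add: act_add_right act_scale_right)

lemma Iid_FT2_subset_K2: "Iid sv \<inter> FT 2 \<subseteq> K2"
proof -
  let ?M = "Iid sv \<inter> FT 2"
  have "gspan 0 (+) smul ?M \<subseteq> ?M"
  proof
    fix x assume "x \<in> gspan 0 (+) smul ?M"
    then show "x \<in> ?M"
      by (induct rule: gspan.induct[where P="\<lambda>x. x \<in> ?M"]) (auto intro: Iid_zero Iid_add Iid_smul FT_add FT_smul)
  qed
  then have "gspan 0 (+) smul ?M = ?M"
    by (auto intro: gspan_base)
  moreover have "\<forall>a. \<forall>m\<in>?M. actF act a m \<in> ?M"
    by (simp add: actF_Iid_sv actF_FT)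
  moreover have "\<forall>m\<in>?M. Phi sv circ m = 0"
    using Phi_Iid[OF leibniz] by blast
  ultimately show ?thesis
    unfolding K2set_def by blast
qed

lemma K2_FT: "f \<in> K2 \<Longrightarrow> f \<in> FT 2"
  and K2_actF: "f \<in> K2 \<Longrightarrow> actF act a f \<in> K2"
  unfolding K2set_def by blast+

lemma KK_FT: "KK K2 (Iid sv) i f \<Longrightarrow> f \<in> FT i"
proof (induct rule: KK.induct[where P="\<lambda>i f. f \<in> FT i"])
  case (KK_br i j p q)
  then show ?case using brF_FT[of p j q "i - j"] by simp
qed (simp_all add: K2_FT FT_add FT_smul)

lemma Ndeg_FT: "f \<in> Ndeg sv act circ i \<Longrightarrow> f \<in> FT i"
  unfolding Ndeg_def by (auto split: if_splits intro: KK_FT)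

lemma N_fin_supp: "f \<in> N \<Longrightarrow> fin_supp f"
  by (induct rule: N_induct[where P=fin_supp]) (auto dest: Ndeg_FT intro: FT_fin_supp)

lemma Iid_FT_N:
  assumes "f \<in> Iid sv" "f \<in> FT j"
  shows "f \<in> N"
proof (rule N_Ndeg)
  consider "j \<le> 1" | "j = 2" | "3 \<le> j" by linarith
  then show "f \<in> Ndeg sv act circ j"
    by cases (use assms Iid_FT2_subset_K2 in \<open>auto simp: Ndeg_def intro: KK_two KK_rel\<close>)
qed

lemma Ndeg_brF_dl_left: "m \<in> Ndeg sv act circ i \<Longrightarrow> brF (dl s) m \<in> N"
proof (cases "2 \<le> i")
  case True
  assume "m \<in> Ndeg sv act circ i"
  with True have "KK K2 (Iid sv) (nlv s + i) (brF (dl s) m)"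
    using KK_br[of "nlv s + i" "nlv s" "dl s"] nlv_pos[of s] by (simp add: Ndeg_def FT_dl)
  with True show ?thesis
    by (intro N_Ndeg[of _ "nlv s + i"]) (simp add: Ndeg_def)
next
  case False
  assume "m \<in> Ndeg sv act circ i"
  with False have "m \<in> Iid sv" "m \<in> FT i" by (auto simp: Ndeg_def)
  then show ?thesis using Iid_FT_N[OF Iid_brl brF_FT[OF FT_dl[of s "nlv s"]]] by simp
qed

lemma Ndeg_brF_dl_right: "m \<in> Ndeg sv act circ i \<Longrightarrow> brF m (dl s) \<in> N"
proof (cases "2 \<le> i")
  case True
  assume m: "m \<in> Ndeg sv act circ i"
  then have mF: "m \<in> FT i" by (rule Ndeg_FT)
  let ?\<epsilon> = "sgnk (i * nlv s) :: 'k"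
  have "brF m (dl s) + smul ?\<epsilon> (brF (dl s) m) \<in> FT (i + nlv s)"
    using brF_FT[OF mF FT_dl[of s "nlv s"]] brF_FT[OF FT_dl[of s "nlv s"] mF]
    by (simp add: FT_add FT_smul add.commute)
  then have "brF m (dl s) + smul ?\<epsilon> (brF (dl s) m) \<in> N"
    by (rule Iid_FT_N[OF antisym_Iid[OF mF]])
  moreover have "smul ?\<epsilon> (brF (dl s) m) \<in> N"
    using Ndeg_brF_dl_left[OF m] by (rule N_smul)
  ultimately show ?thesis
    using N_diff by fastforce
next
  case False
  assume "m \<in> Ndeg sv act circ i"
  with False have "m \<in> Iid sv" "m \<in> FT i" by (auto simp: Ndeg_def)
  then show ?thesis using Iid_FT_N[OF Iid_brr brF_FT[OF _ FT_dl[of s "nlv s"]]] by simp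
qed

lemma N_brF_dl_left: "n \<in> N \<Longrightarrow> brF (dl s) n \<in> N"
  by (induct rule: N_induct[where P="\<lambda>n. brF (dl s) n \<in> N"])
    (simp_all add: Ndeg_brF_dl_left N_add N_smul)

lemma N_brF_dl_right: "n \<in> N \<Longrightarrow> brF n (dl s) \<in> N"
  by (induct rule: N_induct[where P="\<lambda>n. brF n (dl s) \<in> N"])
    (simp_all add: Ndeg_brF_dl_right N_add N_smul)

lemma N_brF_left:
  assumes "fin_supp p" "n \<in> N"
  shows "brF p n \<in> N"
  using assms(1) by (induct rule: fin_supp_induct[where P="\<lambda>p. brF p n \<in> N"])
    (simp_all add: N_brF_dl_left assms(2) N_add N_smul)

lemma N_brF_right:
  assumes "fin_supp p" "n \<in> N"
  shows "brF n p \<in> N"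
  using assms(1) by (induct rule: fin_supp_induct[where P="\<lambda>p. brF n p \<in> N"])
    (simp_all add: N_brF_dl_right assms(2) N_add N_smul)

lemma KK_actF: "KK K2 (Iid sv) i f \<Longrightarrow> KK K2 (Iid sv) i (actF act a f)"
proof (induct rule: KK.induct[where P="\<lambda>i f. KK K2 (Iid sv) i (actF act a f)"])
  case (KK_br i j p q)
  then have "actF act a (brF p q) = brF (actF act a p) q + brF p (actF act a q)"
    by (intro actF_brF) (auto intro: FT_fin_supp KK_FT)
  with KK_br show ?case
    by (simp add: KK.KK_add KK.KK_br actF_FT)
next
  case (KK_add i f h)
  then have "actF act a (f + h) = actF act a f + actF act a h"
    by (intro actF_add) (auto intro: FT_fin_supp KK_FT)
  with KK_add show ?case
    by (simp add: KK.KK_add)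
qed (simp_all add: K2_actF actF_Iid_sv actF_FT actF_smul KK.intros)

lemma N_actF: "n \<in> N \<Longrightarrow> actF act a n \<in> N"
proof (induct rule: N_induct[where P="\<lambda>n. actF act a n \<in> N"])
  case (base i f)
  show ?case
  proof (cases "2 \<le> i")
    case True
    with base show ?thesis
      by (intro N_Ndeg[of _ i]) (simp add: Ndeg_def KK_actF)
  next
    case False
    with base have "f \<in> Iid sv" "f \<in> FT i" by (auto simp: Ndeg_def)
    then show ?thesis by (intro Iid_FT_N actF_Iid_sv actF_FT)
  qed
next
  case (add f g)
  then show ?case by (simp add: actF_add N_fin_supp N_add)
qed (simp_all add: actF_smul N_smul)

lemma cls_mem: "f \<in> cls N f"
  by (simp add: cls_def)

lemma cls_eq_iff: "cls N f = cls N g \<longleftrightarrow> f - g \<in> N"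
proof
  assume "cls N f = cls N g"
  then have "f \<in> cls N g" using cls_mem by metis
  then show "f - g \<in> N" by (simp add: cls_def)
next
  assume fg: "f - g \<in> N"
  show "cls N f = cls N g"
  proof (rule set_eqI)
    fix h
    have "h - g = (h - f) + (f - g)" "h - f = (h - g) - (f - g)" by simp_all
    then show "h \<in> cls N f \<longleftrightarrow> h \<in> cls N g"
      unfolding cls_def using fg N_add N_diff by (metis mem_Collect_eq)
  qed
qed

lemma cls_eqI: "f - g \<in> N \<Longrightarrow> cls N f = cls N g"
  by (simp add: cls_eq_iff)

lemma rep_cls: "rep (cls N f) - f \<in> N"
proof -
  have "rep (cls N f) \<in> cls N f"
    unfolding rep_def by (rule someI[of "\<lambda>h. h \<in> cls N f" f, OF cls_mem])
  then show ?thesis by (simp add: cls_def)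
qed

lemma Tsp_cls: "f \<in> FT n \<Longrightarrow> cls N f \<in> Tsp N n"
  unfolding Tsp_def by blast

lemma cls_0: "cls N 0 = N"
  by (simp add: cls_def)

lemma addT_cls: "addT N (cls N f) (cls N g) = cls N (f + g)"
proof -
  have "(rep (cls N f) + rep (cls N g)) - (f + g) = (rep (cls N f) - f) + (rep (cls N g) - g)"
    by simp
  then show ?thesis unfolding addT_def using rep_cls N_add cls_eqI by metis
qed

lemma smulT_cls: "smulT N c (cls N f) = cls N (smul c f)"
proof -
  have "smul c (rep (cls N f)) - smul c f = smul c (rep (cls N f) - f)"
    by (simp add: fv.scale_right_diff_distrib)
  then show ?thesis unfolding smulT_def using rep_cls N_smul cls_eqI by metis
qed

lemma brT_cls:
  assumes "fin_supp f" "fin_supp g"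
  shows "brT N (cls N f) (cls N g) = cls N (brF f g)"
proof -
  define r where "r = rep (cls N f)"
  define r' where "r' = rep (cls N g)"
  have n: "r - f \<in> N" "r' - g \<in> N" unfolding r_def r'_def by (rule rep_cls)+
  have "fin_supp r'" using fin_supp_add[OF assms(2) N_fin_supp[OF n(2)]] by simp
  then have "brF (r - f) r' + brF f (r' - g) \<in> N"
    using N_add N_brF_right[OF _ n(1)] N_brF_left[OF assms(1) n(2)] by blast
  moreover have "brF r r' - brF f g = brF (r - f) r' + brF f (r' - g)" by simp
  ultimately show ?thesis
    unfolding brT_def r_def[symmetric] r'_def[symmetric] by (metis cls_eqI)
qed

lemma actT_cls:
  assumes "fin_supp f"
  shows "actT act N a (cls N f) = cls N (actF act a f)"
proof -
  define r where "r = rep (cls N f)"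
  have n: "r - f \<in> N" unfolding r_def by (rule rep_cls)
  have "fin_supp r" using fin_supp_add[OF assms N_fin_supp[OF n]] by simp
  then have "actF act a r - actF act a f = actF act a (r - f)"
    by (simp add: actF_diff assms)
  with N_actF[OF n] have "actF act a r - actF act a f \<in> N" by simp
  then show ?thesis
    unfolding actT_def r_def[symmetric] by (rule cls_eqI)
qed

lemma Leaf_linear_N: "dl (Leaf (sv c x + y)) - smul c (dl (Leaf x)) - dl (Leaf y) \<in> N"
proof (rule Iid_FT_N)
  show "dl (Leaf (sv c x + y)) - smul c (dl (Leaf x)) - dl (Leaf y) \<in> Iid sv"
    by (rule Iid_gen) (unfold relgens_def, blast)
  show "dl (Leaf (sv c x + y)) - smul c (dl (Leaf x)) - dl (Leaf y) \<in> FT 1"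
    by (intro FT_diff FT_smul FT_dl) simp_all
qed

lemma Leaf_add_N: "dl (Leaf (x + y)) - (dl (Leaf x) + dl (Leaf y)) \<in> N"
  using Leaf_linear_N[of 1 x y] by (simp add: diff_diff_eq)

lemma Leaf_diff_N: "dl (Leaf (x - y)) - (dl (Leaf x) - dl (Leaf y)) \<in> N"
  using Leaf_linear_N[of "-1" y x] by (simp add: algebra_simps)

lemma actTree_linear_N:
  "actTree act (sg c a + b) t - (smul c (actTree act a t) + actTree act b t) \<in> N"
proof (induct t rule: ltree.induct[where P="\<lambda>t. actTree act (sg c a + b) t - (smul c (actTree act a t) + actTree act b t) \<in> N"])
  case (Leaf x)
  show ?case using Leaf_linear_N by (simp add: act_add_left act_scale_left diff_diff_eq)
next
  case (Node s r)
  have "actTree act (sg c a + b) (Node s r) - (smul c (actTree act a (Node s r)) + actTree act b (Node s r))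
    = brF (actTree act (sg c a + b) s - (smul c (actTree act a s) + actTree act b s)) (dl r)
      + brF (dl s) (actTree act (sg c a + b) r - (smul c (actTree act a r) + actTree act b r))"
    by (simp add: fv.scale_right_distrib algebra_simps)
  with Node show ?case
    by (metis N_add N_brF_dl_left N_brF_dl_right)
qed

lemma actTree_diff_N: "actTree act (a - b) t - (actTree act a t - actTree act b t) \<in> N"
  using actTree_linear_N[of "-1" b a t] by (simp add: algebra_simps)

lemma actTree_br_N:
  "actTree act (br a b) t - (actF act a (actTree act b t) - actF act b (actTree act a t)) \<in> N"
proof (induct t rule: ltree.induct[where P="\<lambda>t. actTree act (br a b) t - (actF act a (actTree act b t) - actF act b (actTree act a t)) \<in> N"])
  case (Leaf x)
  show ?case using Leaf_diff_N by (simp add: act_br)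
next
  case (Node s r)
  have "actTree act (br a b) (Node s r) - (actF act a (actTree act b (Node s r)) - actF act b (actTree act a (Node s r)))
    = brF (actTree act (br a b) s - (actF act a (actTree act b s) - actF act b (actTree act a s))) (dl r)
      + brF (dl s) (actTree act (br a b) r - (actF act a (actTree act b r) - actF act b (actTree act a r)))"
    by (simp add: actF_add actF_brF algebra_simps)
  with Node show ?case
    by (metis N_add N_brF_dl_left N_brF_dl_right)
qed

lemma actTree_homVact_N:
  "actTree act (homVact br act a Xi u) t
     - (actF act a (actTree act (Xi u) t) - actF act (Xi u) (actTree act a t) - actTree act (Xi (act a u)) t) \<in> N"
proof -
  have "actTree act (homVact br act a Xi u) t
     - (actF act a (actTree act (Xi u) t) - actF act (Xi u) (actTree act a t) - actTree act (Xi (act a u)) t)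
   = (actTree act (br a (Xi u) - Xi (act a u)) t - (actTree act (br a (Xi u)) t - actTree act (Xi (act a u)) t))
     + (actTree act (br a (Xi u)) t - (actF act a (actTree act (Xi u) t) - actF act (Xi u) (actTree act a t)))"
    by (simp add: homVact_def)
  then show ?thesis
    by (metis N_add actTree_diff_N actTree_br_N)
qed

abbreviation linear_defect :: "'k \<Rightarrow> ('v \<Rightarrow> 'g) \<Rightarrow> ('v \<Rightarrow> 'g) \<Rightarrow> 'v ltree \<Rightarrow> ('v, 'k) fv" where
  "linear_defect c Xi Psi t \<equiv>
     d_tree act (\<lambda>u. sg c (Xi u) + Psi u) t - (smul c (d_tree act Xi t) + d_tree act Psi t)"

lemma linear_defect_N: "linear_defect c Xi Psi t \<in> N"
proof (induct t rule: ltree_shape_induct[where P="\<lambda>t. linear_defect c Xi Psi t \<in> N"])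
  case (Leaf_Leaf u v)
  have "linear_defect c Xi Psi (Node (Leaf u) (Leaf v))
    = (dl (Leaf (sv c (act (Xi u) v) + act (Psi u) v)) - smul c (dl (Leaf (act (Xi u) v))) - dl (Leaf (act (Psi u) v)))
    + (dl (Leaf (sv c (act (Xi v) u) + act (Psi v) u)) - smul c (dl (Leaf (act (Xi v) u))) - dl (Leaf (act (Psi v) u)))"
    by (simp add: act_add_left act_scale_left fv.scale_right_distrib)
  then show ?case by (simp only: N_add Leaf_linear_N)
next
  case (Leaf_Node u T)
  then have "linear_defect c Xi Psi (Node (Leaf u) T)
    = (actTree act (sg c (Xi u) + Psi u) T - (smul c (actTree act (Xi u) T) + actTree act (Psi u) T))
      - brF (dl (Leaf u)) (linear_defect c Xi Psi T)"
    by (simp add: d_tree_Leaf_Node fv.scale_right_diff_distrib)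
  with Leaf_Node(2) show ?case by (simp only: N_diff actTree_linear_N N_brF_dl_left)
next
  case (Node_Leaf T v)
  then have "linear_defect c Xi Psi (Node T (Leaf v)) = smul (- sgnk (nlv T)) (linear_defect c Xi Psi (Node (Leaf v) T))"
    by (simp add: d_tree_Node_Leaf fv.scale_right_distrib fv.scale_right_diff_distrib mult.commute)
  with Node_Leaf(2) show ?case by (simp only: N_smul)
next
  case (Node_Node X Y)
  then have "linear_defect c Xi Psi (Node X Y)
    = brF (linear_defect c Xi Psi X) (dl Y) + smul (sgnk (nlv X)) (brF (dl X) (linear_defect c Xi Psi Y))"
    by (simp add: d_tree_Node_Node fv.scale_right_distrib fv.scale_right_diff_distrib mult.commute)
  with Node_Node(3,4) show ?case by (simp only: N_add N_smul N_brF_dl_left N_brF_dl_right)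
qed simp

lemma d_tree_homVadd_N: "d_tree act (homVadd Xi Psi) t - (d_tree act Xi t + d_tree act Psi t) \<in> N"
  using linear_defect_N[of 1 Xi Psi t] by (simp add: homVadd_def)

lemma d_tree_zero_N: "d_tree act (\<lambda>_. 0) t \<in> N"
  using linear_defect_N[of "-1" Xi Xi t] by simp

lemma d_tree_homVsmul_N: "d_tree act (homVsmul sg c Xi) t - smul c (d_tree act Xi t) \<in> N"
proof -
  have "d_tree act (homVsmul sg c Xi) t - (smul c (d_tree act Xi t) + d_tree act (\<lambda>_. 0) t) \<in> N"
    using linear_defect_N[of c Xi "\<lambda>_. 0" t] by (simp add: homVsmul_def)
  from N_add[OF this d_tree_zero_N[of t]] show ?thesis by simp
qed

abbreviation homVact_defect :: "'g \<Rightarrow> ('v \<Rightarrow> 'g) \<Rightarrow> 'v ltree \<Rightarrow> ('v, 'k) fv" where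
  "homVact_defect a Xi t \<equiv>
     d_tree act (homVact br act a Xi) t - (actF act a (d_tree act Xi t) - d_free act Xi (actTree act a t))"

lemma homVact_defect_Leaf_Leaf: "homVact_defect a Xi (Node (Leaf u) (Leaf v)) \<in> N"
proof -
  have act_homVact: "act (homVact br act a Xi x) y = act a (act (Xi x) y) - act (Xi x) (act a y) - act (Xi (act a x)) y"
    for x y by (simp add: homVact_def act_diff_left act_br)
  have Leaf_diff2_N: "dl (Leaf (x - y - z)) - (dl (Leaf x) - dl (Leaf y) - dl (Leaf z)) \<in> N" for x y z
  proof -
    define w where "w = x - y"
    have "(dl (Leaf (w - z)) :: ('v, 'k) fv) - (dl (Leaf x) - dl (Leaf y) - dl (Leaf z))
      = (dl (Leaf (w - z)) - (dl (Leaf w) - dl (Leaf z))) + (dl (Leaf w) - (dl (Leaf x) - dl (Leaf y)))"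
      by (simp add: algebra_simps)
    then show ?thesis unfolding w_def by (simp only: N_add Leaf_diff_N)
  qed
  have "homVact_defect a Xi (Node (Leaf u) (Leaf v))
    = (dl (Leaf (act a (act (Xi u) v) - act (Xi u) (act a v) - act (Xi (act a u)) v))
        - (dl (Leaf (act a (act (Xi u) v))) - dl (Leaf (act (Xi u) (act a v))) - dl (Leaf (act (Xi (act a u)) v))))
     + (dl (Leaf (act a (act (Xi v) u) - act (Xi v) (act a u) - act (Xi (act a v)) u))
        - (dl (Leaf (act a (act (Xi v) u))) - dl (Leaf (act (Xi v) (act a u))) - dl (Leaf (act (Xi (act a v)) u))))"
    by (simp add: act_homVact actF_add d_free_add algebra_simps)
  then show ?thesis by (simp only: N_add Leaf_diff2_N)
qed

lemma homVact_defect_Leaf_Node: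
  assumes T: "2 \<le> nlv T" and IH: "homVact_defect a Xi T \<in> N"
  shows "homVact_defect a Xi (Node (Leaf u) T) \<in> N"
proof -
  have d_Leaf_Node: "(d_tree act Z (Node (Leaf w) T) :: ('v, 'k) fv) = actTree act (Z w) T - brF (dl (Leaf w)) (d_tree act Z T)"
    for Z w by (rule d_tree_Leaf_Node[OF T])
  have d_act: "actF act a (d_tree act Xi (Node (Leaf u) T) :: ('v, 'k) fv) = actF act a (actTree act (Xi u) T)
      - (brF (dl (Leaf (act a u))) (d_tree act Xi T) + brF (dl (Leaf u)) (actF act a (d_tree act Xi T)))"
    unfolding d_Leaf_Node by (simp add: actF_diff actF_brF)
  have act_d: "d_free act Xi (actTree act a (Node (Leaf u) T) :: ('v, 'k) fv)
      = d_tree act Xi (Node (Leaf (act a u)) T) + d_free act Xi (brF (dl (Leaf u)) (actTree act a T))"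
    by (simp add: d_free_add)
  have "homVact_defect a Xi (Node (Leaf u) T)
    = (actTree act (homVact br act a Xi u) T
        - (actF act a (actTree act (Xi u) T) - actF act (Xi u) (actTree act a T) - actTree act (Xi (act a u)) T))
      - brF (dl (Leaf u)) (homVact_defect a Xi T)"
    unfolding d_act act_d d_Leaf_Node[of "homVact br act a Xi"] d_Leaf_Node[of Xi "act a u"]
      d_free_brF_Leaf_left[OF actTree_FT T] by (simp add: algebra_simps)
  with IH show ?thesis by (simp only: N_diff actTree_homVact_N N_brF_dl_left)
qed

lemma homVact_defect_Node_Leaf:
  assumes T: "2 \<le> nlv T" and IH: "homVact_defect a Xi (Node (Leaf v) T) \<in> N"
  shows "homVact_defect a Xi (Node T (Leaf v)) \<in> N"
proof -
  let ?\<epsilon> = "- sgnk (nlv T) :: 'k"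
  have d_Node_Leaf: "(d_tree act Z (Node T (Leaf w)) :: ('v, 'k) fv) = smul ?\<epsilon> (d_tree act Z (Node (Leaf w) T))"
    for Z w by (rule d_tree_Node_Leaf[OF T])
  have act_d: "d_free act Xi (actTree act a (Node T (Leaf v)) :: ('v, 'k) fv)
      = d_free act Xi (brF (actTree act a T) (dl (Leaf v))) + d_tree act Xi (Node T (Leaf (act a v)))"
    "d_free act Xi (actTree act a (Node (Leaf v) T) :: ('v, 'k) fv)
      = d_tree act Xi (Node (Leaf (act a v)) T) + d_free act Xi (brF (dl (Leaf v)) (actTree act a T))"
    by (simp_all add: d_free_add)
  have "homVact_defect a Xi (Node T (Leaf v)) = smul ?\<epsilon> (homVact_defect a Xi (Node (Leaf v) T))"
    unfolding act_d d_Node_Leaf d_free_brF_Leaf_right[OF actTree_FT T]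
    by (simp add: actF_smul actF_uminus fv.scale_right_diff_distrib fv.scale_right_distrib algebra_simps)
  with IH show ?thesis by (simp only: N_smul)
qed

lemma homVact_defect_Node_Node:
  assumes X: "2 \<le> nlv X" and Y: "2 \<le> nlv Y"
    and IH: "homVact_defect a Xi X \<in> N" "homVact_defect a Xi Y \<in> N"
  shows "homVact_defect a Xi (Node X Y) \<in> N"
proof -
  let ?\<epsilon> = "sgnk (nlv X) :: 'k"
  have d_Node_Node: "(d_tree act Z (Node X Y) :: ('v, 'k) fv)
      = brF (d_tree act Z X) (dl Y) + smul ?\<epsilon> (brF (dl X) (d_tree act Z Y))" for Z
    by (rule d_tree_Node_Node[OF X Y])
  have act_d: "d_free act Xi (actTree act a (Node X Y) :: ('v, 'k) fv)
      = brF (d_free act Xi (actTree act a X)) (dl Y) + smul ?\<epsilon> (brF (actTree act a X) (d_tree act Xi Y))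
        + (brF (d_tree act Xi X) (actTree act a Y) + smul ?\<epsilon> (brF (dl X) (d_free act Xi (actTree act a Y))))"
    by (simp add: d_free_add d_free_brF[OF actTree_FT FT_dl[of Y "nlv Y"] X Y]
        d_free_brF[OF FT_dl[of X "nlv X"] actTree_FT X Y])
  have "homVact_defect a Xi (Node X Y)
    = brF (homVact_defect a Xi X) (dl Y) + smul ?\<epsilon> (brF (dl X) (homVact_defect a Xi Y))"
    unfolding act_d d_Node_Node
    by (simp add: actF_add actF_smul actF_brF fv.scale_right_distrib fv.scale_right_diff_distrib algebra_simps)
  with IH show ?thesis by (simp only: N_add N_smul N_brF_dl_left N_brF_dl_right)
qed

lemma homVact_defect_N: "homVact_defect a Xi t \<in> N"
proof (induct t rule: ltree_shape_induct[where P="\<lambda>t. homVact_defect a Xi t \<in> N"])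
  case (Leaf_Leaf u v)
  show ?case by (rule homVact_defect_Leaf_Leaf)
next
  case (Leaf_Node u T)
  then show ?case by (rule homVact_defect_Leaf_Node)
next
  case (Node_Leaf T v)
  then show ?case by (rule homVact_defect_Node_Leaf)
next
  case (Node_Node X Y)
  then show ?case by (rule homVact_defect_Node_Node)
qed simp

lemma lin_ext_N:
  assumes "fin_supp f" "\<And>t. T t \<in> N"
  shows "lin_ext smul T f \<in> N"
  using assms(1) by (induct rule: fin_supp_induct[where P="\<lambda>f. lin_ext smul T f \<in> N"])
    (simp_all add: fv.lin_ext_add fv.lin_ext_smul N_add N_smul assms(2))

lemma d_free_homVadd_N: "fin_supp f \<Longrightarrow> d_free act (homVadd Xi Psi) f - (d_free act Xi f + d_free act Psi f) \<in> N"
  using lin_ext_N[of f "\<lambda>t. d_tree act (homVadd Xi Psi) t - (d_tree act Xi t + d_tree act Psi t)"]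
  by (simp add: d_tree_homVadd_N d_free_def fv.lin_ext_diff_fun fv.lin_ext_add_fun)

lemma d_free_homVsmul_N: "fin_supp f \<Longrightarrow> d_free act (homVsmul sg c Xi) f - smul c (d_free act Xi f) \<in> N"
  using lin_ext_N[of f "\<lambda>t. d_tree act (homVsmul sg c Xi) t - smul c (d_tree act Xi t)"]
  by (simp add: d_tree_homVsmul_N d_free_def fv.lin_ext_diff_fun fv.lin_ext_smul_fun)

lemma d_free_zero_N: "fin_supp f \<Longrightarrow> d_free act (\<lambda>_. 0) f \<in> N"
  using lin_ext_N[of f "d_tree act (\<lambda>_. 0)"] by (simp add: d_tree_zero_N d_free_def)

lemma d_free_homVact_N:
  assumes "fin_supp f"
  shows "d_free act (homVact br act a Xi) f - (actF act a (d_free act Xi f) - d_free act Xi (actF act a f)) \<in> N"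
proof -
  have "lin_ext smul (\<lambda>t. actF act a (d_tree act Xi t)) f = actF act a (d_free act Xi f)"
    unfolding d_free_def by (rule lin_ext_comp_linear[OF actF_add actF_smul actF_0 fin_supp_d_tree assms])
  moreover have "lin_ext smul (\<lambda>t. d_free act Xi (actTree act a t)) f = d_free act Xi (actF act a f)"
    unfolding actF_eq_lin_ext by (rule lin_ext_comp_linear[OF d_free_add d_free_smul d_free_0 fin_supp_actTree assms])
  ultimately show ?thesis
    using lin_ext_N[OF assms, of "\<lambda>t. homVact_defect a Xi t"]
    by (simp add: homVact_defect_N d_free_def[of act "homVact br act a Xi"] fv.lin_ext_diff_fun)
qed

section \<open>The morphism \<open>\<mu>\<close>\<close>

definition d_free_respects_N :: "nat \<Rightarrow> ('v \<Rightarrow> 'g) \<Rightarrow> bool" where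
  "d_free_respects_N i Xi \<longleftrightarrow> (\<forall>f \<in> FT (i + 1). f \<in> N \<longrightarrow> d_free act Xi f \<in> N)"

definition rep_deg :: "nat \<Rightarrow> ('v, 'k) fv set \<Rightarrow> ('v, 'k) fv" where
  "rep_deg i X = (SOME f. f \<in> FT (i + 1) \<and> X = cls N f)"

text \<open>\<open>mu i \<Xi>\<close> is \<open>\<mu>\<^sub>-\<^sub>i(\<Xi>)\<close>: the map \<open>T\<^sub>-\<^sub>i\<^sub>-\<^sub>1 \<rightarrow> T\<^sub>-\<^sub>i\<close> that \<open>d_free act \<Xi>\<close> induces on homogeneous
  representatives; it is independent of the representative when \<open>d_free_respects_N i \<Xi>\<close>.\<close>

definition mu :: "nat \<Rightarrow> ('v \<Rightarrow> 'g) \<Rightarrow> ('v, 'k) fv set \<Rightarrow> ('v, 'k) fv set" where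
  "mu i Xi = hext N i (\<lambda>X. cls N (d_free act Xi (rep_deg i X)))"

lemma rep_deg:
  assumes "X \<in> Tsp N (i + 1)"
  shows "rep_deg i X \<in> FT (i + 1)" "X = cls N (rep_deg i X)"
proof -
  from assms have "\<exists>f. f \<in> FT (i + 1) \<and> X = cls N f"
    unfolding Tsp_def by blast
  then have "rep_deg i X \<in> FT (i + 1) \<and> X = cls N (rep_deg i X)"
    unfolding rep_deg_def by (rule someI_ex)
  then show "rep_deg i X \<in> FT (i + 1)" "X = cls N (rep_deg i X)" by auto
qed

lemma mu_Tsp: "X \<in> Tsp N (i + 1) \<Longrightarrow> mu i Xi X = cls N (d_free act Xi (rep_deg i X))"
  and mu_not_Tsp: "X \<notin> Tsp N (i + 1) \<Longrightarrow> mu i Xi X = N"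
  by (simp_all add: mu_def hext_def)

lemma mu_cls:
  assumes f: "f \<in> FT (i + 1)" and respects: "d_free_respects_N i Xi"
  shows "mu i Xi (cls N f) = cls N (d_free act Xi f)"
proof -
  note r = rep_deg[OF Tsp_cls[OF f]]
  have "rep_deg i (cls N f) - f \<in> N"
    using r(2) cls_eq_iff[of "rep_deg i (cls N f)" f] by simp
  with respects FT_diff[OF r(1) f] have "d_free act Xi (rep_deg i (cls N f) - f) \<in> N"
    by (simp add: d_free_respects_N_def)
  then have "d_free act Xi (rep_deg i (cls N f)) - d_free act Xi f \<in> N"
    by (simp add: d_free_diff FT_fin_supp[OF r(1)] FT_fin_supp[OF f])
  then show ?thesis
    unfolding mu_Tsp[OF Tsp_cls[OF f]] by (rule cls_eqI)
qed

lemma mu_homVadd: "mu i (homVadd Xi Psi) = hadd N i (mu i Xi) (mu i Psi)"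
proof
  fix X
  show "mu i (homVadd Xi Psi) X = hadd N i (mu i Xi) (mu i Psi) X"
  proof (cases "X \<in> Tsp N (i + 1)")
    case True
    have "mu i (homVadd Xi Psi) X = cls N (d_free act Xi (rep_deg i X) + d_free act Psi (rep_deg i X))"
      unfolding mu_Tsp[OF True] by (rule cls_eqI[OF d_free_homVadd_N[OF FT_fin_supp[OF rep_deg(1)[OF True]]]])
    with True show ?thesis by (simp add: hadd_def hext_def mu_Tsp addT_cls)
  qed (simp add: hadd_def hext_def mu_not_Tsp)
qed

lemma mu_homVsmul: "mu i (homVsmul sg c Xi) = hsmul N i c (mu i Xi)"
proof
  fix X
  show "mu i (homVsmul sg c Xi) X = hsmul N i c (mu i Xi) X"
  proof (cases "X \<in> Tsp N (i + 1)")
    case True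
    have "mu i (homVsmul sg c Xi) X = cls N (smul c (d_free act Xi (rep_deg i X)))"
      unfolding mu_Tsp[OF True] by (rule cls_eqI[OF d_free_homVsmul_N[OF FT_fin_supp[OF rep_deg(1)[OF True]]]])
    with True show ?thesis by (simp add: hsmul_def hext_def mu_Tsp smulT_cls)
  qed (simp add: hsmul_def hext_def mu_not_Tsp)
qed

lemma mu_zero: "mu i (\<lambda>_. 0) = hzero N"
proof
  fix X
  show "mu i (\<lambda>_. 0) X = hzero N X"
  proof (cases "X \<in> Tsp N (i + 1)")
    case True
    have "cls N (d_free act (\<lambda>_. 0) (rep_deg i X)) = cls N 0"
      using d_free_zero_N[OF FT_fin_supp[OF rep_deg(1)[OF True]]] by (intro cls_eqI) simp
    then show ?thesis unfolding mu_Tsp[OF True] hzero_def cls_0 .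
  qed (simp add: hzero_def mu_not_Tsp)
qed

lemma mu_homVact:
  assumes respects: "d_free_respects_N i Xi"
  shows "mu i (homVact br act a Xi) = hact act N i a (mu i Xi)"
proof
  fix X
  show "mu i (homVact br act a Xi) X = hact act N i a (mu i Xi) X"
  proof (cases "X \<in> Tsp N (i + 1)")
    case True
    let ?f = "rep_deg i X"
    note r = rep_deg[OF True]
    have "actT act N a X = cls N (actF act a ?f)"
      by (subst r(2)) (rule actT_cls[OF FT_fin_supp[OF r(1)]])
    then have "mu i Xi (actT act N a X) = cls N (d_free act Xi (actF act a ?f))"
      using mu_cls[OF actF_FT[OF r(1)] respects] by simp
    moreover have "actT act N a (mu i Xi X) = cls N (actF act a (d_free act Xi ?f))"
      unfolding mu_Tsp[OF True] by (rule actT_cls) simp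
    ultimately have "hact act N i a (mu i Xi) X = cls N (actF act a (d_free act Xi ?f) - d_free act Xi (actF act a ?f))"
      using True by (simp add: hact_def hext_def smulT_cls addT_cls)
    also have "\<dots> = mu i (homVact br act a Xi) X"
      unfolding mu_Tsp[OF True] by (rule sym, rule cls_eqI[OF d_free_homVact_N[OF FT_fin_supp[OF r(1)]]])
    finally show ?thesis by simp
  qed (simp add: hact_def hext_def mu_not_Tsp)
qed

lemma d_free_respects_N_homVadd:
  assumes "d_free_respects_N i Xi" "d_free_respects_N i Psi"
  shows "d_free_respects_N i (homVadd Xi Psi)"
  unfolding d_free_respects_N_def
proof (intro ballI impI)
  fix f assume f: "f \<in> FT (i + 1)" "f \<in> N"
  have "d_free act Xi f + d_free act Psi f \<in> N"
    using assms f by (simp add: d_free_respects_N_def N_add)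
  moreover have "d_free act (homVadd Xi Psi) f - (d_free act Xi f + d_free act Psi f) \<in> N"
    by (rule d_free_homVadd_N[OF FT_fin_supp[OF f(1)]])
  ultimately show "d_free act (homVadd Xi Psi) f \<in> N" using N_add by fastforce
qed

lemma d_free_respects_N_homVsmul:
  assumes "d_free_respects_N i Xi"
  shows "d_free_respects_N i (homVsmul sg c Xi)"
  unfolding d_free_respects_N_def
proof (intro ballI impI)
  fix f assume f: "f \<in> FT (i + 1)" "f \<in> N"
  have "smul c (d_free act Xi f) \<in> N"
    using assms f by (simp add: d_free_respects_N_def N_smul)
  moreover have "d_free act (homVsmul sg c Xi) f - smul c (d_free act Xi f) \<in> N"
    by (rule d_free_homVsmul_N[OF FT_fin_supp[OF f(1)]])
  ultimately show "d_free act (homVsmul sg c Xi) f \<in> N" using N_add by fastforce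
qed

lemma d_free_respects_N_homVact:
  assumes "d_free_respects_N i Xi"
  shows "d_free_respects_N i (homVact br act a Xi)"
  unfolding d_free_respects_N_def
proof (intro ballI impI)
  fix f assume f: "f \<in> FT (i + 1)" "f \<in> N"
  have "d_free act Xi f \<in> N" "d_free act Xi (actF act a f) \<in> N"
    using assms f actF_FT[OF f(1), of act a] N_actF[OF f(2), of a]
    by (simp_all add: d_free_respects_N_def)
  then have "actF act a (d_free act Xi f) - d_free act Xi (actF act a f) \<in> N"
    by (simp add: N_diff N_actF)
  moreover have "d_free act (homVact br act a Xi) f - (actF act a (d_free act Xi f) - d_free act Xi (actF act a f)) \<in> N"
    by (rule d_free_homVact_N[OF FT_fin_supp[OF f(1)]])
  ultimately show "d_free act (homVact br act a Xi) f \<in> N" using N_add by fastforce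
qed

section \<open>The differential is induced by \<open>d_free act \<Theta>\<close>\<close>

lemma smulT_0: "X \<in> Tsp N n \<Longrightarrow> smulT N 0 X = N"
  unfolding Tsp_def using smulT_cls[of 0] cls_0 by auto

lemma cls_dl_Node: "cls N (dl (Node s r)) = brT N (cls N (dl s)) (cls N (dl r))"
  by (simp add: brT_cls)

lemma cls_dl_Node_Leaf:
  "cls N (dl (Node T (Leaf v))) = smulT N (- sgnk (nlv T)) (cls N (dl (Node (Leaf v) T)))"
proof -
  have "brF (dl T) (dl (Leaf v)) + smul (sgnk (nlv T * nlv (Leaf v))) (brF (dl (Leaf v)) (dl T)) \<in> N"
  proof (rule Iid_FT_N)
    show "brF (dl T) (dl (Leaf v)) + smul (sgnk (nlv T * nlv (Leaf v))) (brF (dl (Leaf v)) (dl T)) \<in> Iid sv"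
      by (rule antisym_Iid[OF FT_dl]) simp
    show "brF (dl T) (dl (Leaf v)) + smul (sgnk (nlv T * nlv (Leaf v))) (brF (dl (Leaf v)) (dl T)) \<in> FT (nlv T + 1)"
      by (simp add: FT_add FT_smul FT_dl)
  qed
  then have "dl (Node T (Leaf v)) - smul (- sgnk (nlv T)) (dl (Node (Leaf v) T)) \<in> N"
    by simp
  then show ?thesis
    by (simp add: cls_eqI smulT_cls)
qed

context
  fixes D :: "nat \<Rightarrow> ('v, 'k) fv set \<Rightarrow> ('v, 'k) fv set"
  assumes differential: "is_LL_differential sv act circ Theta D"
begin

lemma D_linear: "1 \<le> i \<Longrightarrow> linear_T N i (D i)"
  and D_brT_iota_iota: "D 1 (brT N (iotaT N u) (iotaT N v)) = iotaT N (sv 2 (symprod sv circ u v))"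
  and D_brT_iota: "2 \<le> i \<Longrightarrow> X \<in> Tsp N i \<Longrightarrow> D i (brT N (iotaT N u) X)
     = addT N (actT act N (Theta u) X) (smulT N (-1) (brT N (iotaT N u) (D (i - 1) X)))"
  and D_brT: "2 \<le> i \<Longrightarrow> 2 \<le> j \<Longrightarrow> X \<in> Tsp N i \<Longrightarrow> Y \<in> Tsp N j \<Longrightarrow>
     D (i + j - 1) (brT N X Y) = addT N (brT N (D (i - 1) X) Y) (smulT N ((-1) ^ i) (brT N X (D (j - 1) Y)))"
  using differential unfolding is_LL_differential_def Let_def by blast+

lemma D_addT: "1 \<le> i \<Longrightarrow> X \<in> Tsp N (i + 1) \<Longrightarrow> Y \<in> Tsp N (i + 1) \<Longrightarrow> D i (addT N X Y) = addT N (D i X) (D i Y)"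
  and D_smulT: "1 \<le> i \<Longrightarrow> X \<in> Tsp N (i + 1) \<Longrightarrow> D i (smulT N c X) = smulT N c (D i X)"
  and D_Tsp: "1 \<le> i \<Longrightarrow> X \<in> Tsp N (i + 1) \<Longrightarrow> D i X \<in> Tsp N i"
  using D_linear unfolding linear_T_def by blast+

lemma D_zero:
  assumes "1 \<le> i"
  shows "D i N = N"
proof -
  have N: "N \<in> Tsp N (i + 1)" using Tsp_cls[OF FT_0] cls_0 by metis
  then have "D i N = smulT N 0 (D i N)" using D_smulT[OF assms N, of 0] smulT_0[OF N] by simp
  then show ?thesis using smulT_0[OF D_Tsp[OF assms N]] by simp
qed

abbreviation D_agrees :: "'v ltree \<Rightarrow> bool" where
  "D_agrees t \<equiv> D (nlv t - 1) (cls N (dl t)) = cls N (d_tree act Theta t)"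

lemma D_agrees_Leaf_Leaf: "D_agrees (Node (Leaf u) (Leaf v))"
proof -
  have "D 1 (cls N (dl (Node (Leaf u) (Leaf v)))) = iotaT N (sv 2 (symprod sv circ u v))"
    using D_brT_iota_iota[of u v] by (simp add: cls_dl_Node iotaT_def)
  also have "\<dots> = cls N (dl (Leaf (circ u v + circ v u)))"
    by (simp add: iotaT_def symprod_def)
  also have "\<dots> = cls N (dl (Leaf (circ u v)) + dl (Leaf (circ v u)))"
    by (rule cls_eqI[OF Leaf_add_N])
  finally show ?thesis by (simp add: circ_eq_act)
qed

lemma D_agrees_Leaf_Node:
  assumes T: "2 \<le> nlv T" and IH: "D_agrees T"
  shows "D_agrees (Node (Leaf u) T)"
proof -
  have "D (nlv T) (cls N (dl (Node (Leaf u) T)))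
     = addT N (actT act N (Theta u) (cls N (dl T))) (smulT N (-1) (brT N (iotaT N u) (cls N (d_tree act Theta T))))"
    using D_brT_iota[OF T Tsp_cls[OF FT_dl], of T u] IH by (simp add: cls_dl_Node iotaT_def)
  also have "\<dots> = cls N (d_tree act Theta (Node (Leaf u) T))"
    by (simp add: iotaT_def brT_cls actT_cls smulT_cls addT_cls d_tree_Leaf_Node[OF T])
  finally show ?thesis by simp
qed

lemma D_agrees_Node_Leaf:
  assumes T: "2 \<le> nlv T" and IH: "D_agrees (Node (Leaf v) T)"
  shows "D_agrees (Node T (Leaf v))"
proof -
  have "D (nlv T) (cls N (dl (Node T (Leaf v))))
      = smulT N (- sgnk (nlv T)) (cls N (d_tree act Theta (Node (Leaf v) T)))"
    using D_smulT[of "nlv T"] T IH Tsp_cls[OF FT_dl[of "Node (Leaf v) T" "nlv T + 1"]]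
    by (simp add: cls_dl_Node_Leaf)
  also have "\<dots> = cls N (d_tree act Theta (Node T (Leaf v)))"
    by (simp add: smulT_cls d_tree_Node_Leaf[OF T])
  finally show ?thesis by simp
qed

lemma D_agrees_Node_Node:
  assumes X: "2 \<le> nlv X" and Y: "2 \<le> nlv Y" and IH: "D_agrees X" "D_agrees Y"
  shows "D_agrees (Node X Y)"
proof -
  have "D (nlv X + nlv Y - 1) (cls N (dl (Node X Y)))
    = addT N (brT N (cls N (d_tree act Theta X)) (cls N (dl Y)))
        (smulT N ((-1) ^ nlv X) (brT N (cls N (dl X)) (cls N (d_tree act Theta Y))))"
    using D_brT[OF X Y Tsp_cls[OF FT_dl] Tsp_cls[OF FT_dl]] IH by (simp add: cls_dl_Node)
  also have "\<dots> = cls N (d_tree act Theta (Node X Y))"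
    by (simp add: brT_cls smulT_cls addT_cls d_tree_Node_Node[OF X Y] sgnk_def)
  finally show ?thesis by simp
qed

lemma D_agrees: "2 \<le> nlv t \<longrightarrow> D_agrees t"
proof (induct t rule: ltree_shape_induct[where P="\<lambda>t. 2 \<le> nlv t \<longrightarrow> D_agrees t"])
  case (Leaf_Leaf u v)
  show ?case using D_agrees_Leaf_Leaf by blast
next
  case (Leaf_Node u T)
  then show ?case using D_agrees_Leaf_Node by blast
next
  case (Node_Leaf T v)
  then show ?case using D_agrees_Node_Leaf by (simp add: nlv_pos add_increasing2)
next
  case (Node_Node X Y)
  then show ?case using D_agrees_Node_Node by blast
qed simp

lemma D_cls:
  assumes "f \<in> FT m" "2 \<le> m"
  shows "D (m - 1) (cls N f) = cls N (d_free act Theta f)"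
  using assms(1)
proof (induct rule: FT_induct[where P="\<lambda>f. D (m - 1) (cls N f) = cls N (d_free act Theta f)"])
  case zero
  then show ?case using D_zero assms(2) by (simp add: cls_0)
next
  case (base t)
  then show ?case using D_agrees[of t] assms(2) by simp
next
  case (add f g)
  have m: "1 \<le> m - 1" "m - 1 + 1 = m" using assms(2) by auto
  have "D (m - 1) (cls N (f + g)) = D (m - 1) (addT N (cls N f) (cls N g))"
    by (simp add: addT_cls)
  also have "\<dots> = addT N (D (m - 1) (cls N f)) (D (m - 1) (cls N g))"
    using D_addT[OF m(1)] Tsp_cls[OF add(1)] Tsp_cls[OF add(2)] m(2) by simp
  finally have "D (m - 1) (cls N (f + g)) = addT N (D (m - 1) (cls N f)) (D (m - 1) (cls N g))" .
  with add show ?case by (simp add: addT_cls d_free_add FT_fin_supp)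
next
  case (smul c f)
  have m: "1 \<le> m - 1" "m - 1 + 1 = m" using assms(2) by auto
  have "D (m - 1) (cls N (smul c f)) = D (m - 1) (smulT N c (cls N f))"
    by (simp add: smulT_cls)
  also have "\<dots> = smulT N c (D (m - 1) (cls N f))"
    using D_smulT[OF m(1)] Tsp_cls[OF smul(1)] m(2) by simp
  finally have "D (m - 1) (cls N (smul c f)) = smulT N c (D (m - 1) (cls N f))" .
  with smul show ?case by (simp add: smulT_cls d_free_smul)
qed

lemma d_free_respects_N_Theta:
  assumes "1 \<le> i"
  shows "d_free_respects_N i Theta"
  unfolding d_free_respects_N_def
proof (intro ballI impI)
  fix f assume f: "f \<in> FT (i + 1)" "f \<in> N"
  have "cls N (d_free act Theta f) = D i (cls N f)"
    using D_cls[OF f(1)] assms by simp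
  also have "\<dots> = cls N 0"
    using f(2) D_zero[OF assms] cls_eqI[of f 0] by (simp add: cls_0)
  finally show "d_free act Theta f \<in> N"
    by (simp add: cls_eq_iff)
qed

lemma d_free_respects_N_foldr:
  "1 \<le> i \<Longrightarrow> d_free_respects_N i (foldr (homVact br act) as Theta)"
  by (induct as) (simp_all add: d_free_respects_N_Theta d_free_respects_N_homVact)

lemma d_free_respects_N_R_Theta:
  assumes "1 \<le> i" "Xi \<in> R_Theta sg br act Theta"
  shows "d_free_respects_N i Xi"
  using assms(2) unfolding R_Theta_def
proof (induct rule: gspan.induct[where P="d_free_respects_N i"])
  case gspan_zero
  show ?case
    unfolding d_free_respects_N_def using d_free_zero_N FT_fin_supp by blast
next
  case (gspan_base Xi)
  then show ?case using d_free_respects_N_foldr[OF assms(1)] by blast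
qed (simp_all add: d_free_respects_N_homVadd d_free_respects_N_homVsmul)

lemma mu_Theta:
  assumes "1 \<le> i"
  shows "mu i Theta = hext N i (D i)"
proof
  fix X
  show "mu i Theta X = hext N i (D i) X"
  proof (cases "X \<in> Tsp N (i + 1)")
    case True
    note r = rep_deg[OF True]
    have "mu i Theta X = D i (cls N (rep_deg i X))"
      unfolding mu_Tsp[OF True] using D_cls[OF r(1)] assms by simp
    with True r(2) show ?thesis by (simp add: hext_def)
  qed (simp add: hext_def mu_not_Tsp)
qed

lemma mu_foldr:
  "1 \<le> i \<Longrightarrow> mu i (foldr (homVact br act) as Theta) = foldr (hact act N i) as (hext N i (D i))"
  by (induct as) (simp_all add: mu_Theta mu_homVact d_free_respects_N_foldr)

lemma mu_homVact_R_Theta: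
  "1 \<le> i \<Longrightarrow> Xi \<in> R_Theta sg br act Theta \<Longrightarrow> mu i (homVact br act a Xi) = hact act N i a (mu i Xi)"
  by (rule mu_homVact[OF d_free_respects_N_R_Theta])

lemma mu_R_Theta_subset_Rcyc:
  assumes "1 \<le> i" "Xi \<in> R_Theta sg br act Theta"
  shows "mu i Xi \<in> Rcyc act N i (hext N i (D i))"
  using assms(2) unfolding R_Theta_def
proof (induct rule: gspan.induct[where P="\<lambda>Xi. mu i Xi \<in> Rcyc act N i (hext N i (D i))"])
  case gspan_zero
  show ?case unfolding mu_zero Rcyc_def by (rule gspan.gspan_zero)
next
  case (gspan_base Xi)
  then show ?case unfolding Rcyc_def using mu_foldr[OF assms(1)] by (auto intro: gspan.gspan_base)
next
  case (gspan_add Xi Psi)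
  from gspan_add(2,4) show ?case unfolding mu_homVadd Rcyc_def by (rule gspan.gspan_add)
next
  case (gspan_smul Xi c)
  from gspan_smul(2) show ?case unfolding mu_homVsmul Rcyc_def by (rule gspan.gspan_smul)
qed

lemma Rcyc_subset_mu_image:
  assumes "1 \<le> i" "Y \<in> Rcyc act N i (hext N i (D i))"
  shows "Y \<in> mu i ` R_Theta sg br act Theta"
  using assms(2) unfolding Rcyc_def
proof (induct rule: gspan.induct[where P="\<lambda>Y. Y \<in> mu i ` R_Theta sg br act Theta"])
  case gspan_zero
  have "(\<lambda>_. 0) \<in> R_Theta sg br act Theta" unfolding R_Theta_def by (rule gspan.gspan_zero)
  then show ?case using mu_zero by (metis image_eqI)
next
  case (gspan_base Y)
  then obtain as where "Y = foldr (hact act N i) as (hext N i (D i))" by blast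
  moreover have "foldr (homVact br act) as Theta \<in> R_Theta sg br act Theta"
    unfolding R_Theta_def by (rule gspan.gspan_base) blast
  ultimately show ?case using mu_foldr[OF assms(1)] by (metis image_eqI)
next
  case (gspan_add Y Z)
  then obtain Xi Psi where "Xi \<in> R_Theta sg br act Theta" "Psi \<in> R_Theta sg br act Theta"
    "Y = mu i Xi" "Z = mu i Psi" by blast
  moreover have "homVadd Xi Psi \<in> R_Theta sg br act Theta"
    using calculation(1,2) unfolding R_Theta_def by (rule gspan.gspan_add)
  ultimately show ?case using mu_homVadd by (metis image_eqI)
next
  case (gspan_smul Y c)
  then obtain Xi where "Xi \<in> R_Theta sg br act Theta" "Y = mu i Xi" by blast
  moreover have "homVsmul sg c Xi \<in> R_Theta sg br act Theta"
    using calculation(1) unfolding R_Theta_def by (rule gspan.gspan_smul)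
  ultimately show ?case using mu_homVsmul by (metis image_eqI)
qed

lemma mu_image_R_Theta: "1 \<le> i \<Longrightarrow> mu i ` R_Theta sg br act Theta = Rcyc act N i (hext N i (D i))"
  using mu_R_Theta_subset_Rcyc Rcyc_subset_mu_image by blast

end

end

theorem mainTheorem10:
  fixes sg :: "'k::field_char_0 \<Rightarrow> 'g \<Rightarrow> 'g::ab_group_add"
    and br :: "'g \<Rightarrow> 'g \<Rightarrow> 'g"
    and sv :: "'k \<Rightarrow> 'v \<Rightarrow> 'v::ab_group_add"
    and act :: "'g \<Rightarrow> 'v \<Rightarrow> 'v"
    and circ :: "'v \<Rightarrow> 'v \<Rightarrow> 'v"
    and Theta :: "'v \<Rightarrow> 'g"
    and D :: "nat \<Rightarrow> ('v, 'k) fv set \<Rightarrow> ('v, 'k) fv set"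
  assumes LLT: "lie_leibniz_triple sg br sv act circ Theta"
    and Dpartial: "is_LL_differential sv act circ Theta D"
  shows "\<forall>i\<ge>1. \<exists>mu :: ('v \<Rightarrow> 'g) \<Rightarrow> (('v, 'k) fv set \<Rightarrow> ('v, 'k) fv set).
     let N = Ntot sv act circ; R = Rcyc act N i (hext N i (D i)) in
       (\<forall>Xi\<in>R_Theta sg br act Theta. mu Xi \<in> R)
     \<and> (\<forall>Xi\<in>R_Theta sg br act Theta. \<forall>Psi\<in>R_Theta sg br act Theta.
          mu (homVadd Xi Psi) = hadd N i (mu Xi) (mu Psi))
     \<and> (\<forall>c. \<forall>Xi\<in>R_Theta sg br act Theta. mu (homVsmul sg c Xi) = hsmul N i c (mu Xi))
     \<and> (\<forall>a. \<forall>Xi\<in>R_Theta sg br act Theta. mu (homVact br act a Xi) = hact act N i a (mu Xi))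
     \<and> mu ` R_Theta sg br act Theta = R
     \<and> mu Theta = hext N i (D i)"
proof -
  interpret lie_leibniz sg br sv act circ Theta
    by (rule lie_leibniz.intro[OF LLT])
  show ?thesis
    unfolding Let_def
  proof (intro allI impI exI conjI ballI)
    fix i :: nat
    assume i: "1 \<le> i"
    show "mu i Xi \<in> Rcyc act N i (hext N i (D i))" if "Xi \<in> R_Theta sg br act Theta" for Xi
      by (rule mu_R_Theta_subset_Rcyc[OF Dpartial i that])
    show "mu i (homVadd Xi Psi) = hadd N i (mu i Xi) (mu i Psi)" for Xi Psi
      by (rule mu_homVadd)
    show "mu i (homVsmul sg c Xi) = hsmul N i c (mu i Xi)" for c Xi
      by (rule mu_homVsmul)
    show "mu i (homVact br act a Xi) = hact act N i a (mu i Xi)" if "Xi \<in> R_Theta sg br act Theta" for a Xi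
      by (rule mu_homVact_R_Theta[OF Dpartial i that])
    show "mu i ` R_Theta sg br act Theta = Rcyc act N i (hext N i (D i))"
      by (rule mu_image_R_Theta[OF Dpartial i])
    show "mu i Theta = hext N i (D i)"
      by (rule mu_Theta[OF Dpartial i])
  qed
qed

end
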